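(* Fix a cooperative Markov game and a stationary joint policy $\pi$ as described in the context. (i) For every deterministic sequence $\Lambda=\lambda_0\lambda_1\cdots\in\{0,1\}^\omega$ of communication availabilities, $$KL\big(\Gamma^{full}\,\|\,\Gamma^{img}_{0}\big)\ge KL\big(\Gamma^{full}\,\|\,\Gamma^{int}_{\Lambda}\big).$$ (ii) Let $q\in(0,1]$. Let $\Lambda=\lambda_0\lambda_1\cdots$ be random, with the $\lambda_t$ i.i.d. Bernoulli with $\Pr(\lambda_t=1)=1-q$, and independent of the game's randomness. Let $\Gamma^{int}=\mathbb{E}_\Lambda[\Gamma^{int}_\Lambda]$. Then $$KL\big(\Gamma^{full}\,\|\,\Gamma^{img}_{0}\big)\ge \frac{1}{q}\,KL\big(\Gamma^{full}\,\|\,\Gamma^{int}\big).$$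
   Context: Multiagent model: there are $N$ agents. Agent $i$ is modeled by a finite MDP $\mathcal{M}^i=(\mathcal{S}^i,s_I^i,\mathcal{A}^i,\mathcal{T}^i)$. Here $\mathcal{S}^i$ is a finite state set, $s_I^i\in\mathcal{S}^i$ is the initial state, $\mathcal{A}^i$ is a finite action set, and $\mathcal{T}^i:\mathcal{S}^i\times\mathcal{A}^i\to\Delta(\mathcal{S}^i)$ is the transition kernel. The cooperative Markov game has joint state set $\mathbf{S}=\prod_i\mathcal{S}^i$, joint initial state $\mathbf{s}_I=(s_I^1,\dots,s_I^N)$, and joint action set $\mathbf{A}=\prod_i\mathcal{A}^i$. Its transition kernel is $\mathbf{T}(\mathbf{s},\mathbf{a},\mathbf{y})=\prod_{i}\mathcal{T}^i(s^i,a^i,y^i)$. A stationary joint policy is a map $\pi:\mathbf{S}\to\Delta(\mathbf{A})$. A joint path is an infinite sequence $\mathbf{s}_0\mathbf{a}_0\mathbf{s}_1\mathbf{a}_1\cdots\in(\mathbf{S}\times\mathbf{A})^\omega$ with $\mathbf{s}_0=\mathbf{s}_I$. All random sampling below is mutually independent given the stated conditioning. Full-communication execution: at each time $t$, $\mathbf{a}_t\sim\pi(\mathbf{s}_t)$ is drawn once for the whole team. Each agent $i$ then moves to $s^i_{t+1}\sim\mathcal{T}^i(s^i_t,a^i_t)$. $\Gamma^{full}$ denotes the resulting distribution over joint paths. Imaginary play with loss time $t_{loss}\in\{0,1,\dots\}\cup\{\infty\}$ (Algorithm 1): - For $t<t_{loss}$, the team acts exactly as under full communication. Each agent $i$ records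 $\hat s^j_{t,i}=s^j_t$ for all $j\ne i$, and records $\hat{\mathbf a}_{t,i}=\mathbf a_t$. - For $t\ge t_{loss}$, each agent $i$ acts separately and does not observe the others. First it sets its imaginary teammate states. If $t=0$, it sets $\hat s^j_{0,i}=s_I^j$ for $j\neq i$. Otherwise it samples $\hat s^j_{t,i}\sim\mathcal{T}^j(\hat s^j_{t-1,i},\hat a^j_{t-1,i})$ for $j\ne i$, where $\hat a^j_{t-1,i}$ is the $j$-th component of $\hat{\mathbf a}_{t-1,i}$. - Agent $i$ then samples its own joint action $\hat{\mathbf a}_{t,i}\sim\pi(\hat s^1_{t,i},\dots,\hat s^{i-1}_{t,i},s^i_t,\hat s^{i+1}_{t,i},\dots,\hat s^N_{t,i})$. - Agent $i$ executes only its own component $\hat a^i_{t,i}$, and moves to $s^i_{t+1}\sim\mathcal{T}^i(s^i_t,\hat a^i_{t,i})$. - The realized joint action at time $t$ is $\mathbf a_t=(\hat a^1_{t,1},\dots,\hat a^N_{t,N})$. $\Gamma^{img}_{t_{loss}}$ denotes the induced distribution over realized joint paths. Intermittent communication with availability sequence $\Lambda=\lambda_0\lambda_1\cdots\in\{0,1\}^\omega$ (Algorithm 2): at each time $t$, the team acts as follows. - If $\lambda_t=1$, the team acts as under full communication. It samples a single $\mathbf a_t\sim\pi(\mathbf s_t)$, and each agent $i$ sets $\hat s^j_{t,i}=s^j_t$ for $j\neq i$ and $\hat{\mathbf a}_{t,i}=\mathbf a_t$. - If $\lambda_t=0$, each agent $i$ acts separately. First it sets its imaginary teammate states. If $t=0$,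 it sets $\hat s^j_{0,i}=s_I^j$; otherwise it samples $\hat s^j_{t,i}\sim\mathcal{T}^j(\hat s^j_{t-1,i},\hat a^j_{t-1,i})$ for $j\ne i$. - It then samples $\hat{\mathbf a}_{t,i}\sim\pi(\hat s^1_{t,i},\dots,s^i_t,\dots,\hat s^N_{t,i})$, and executes its component $\hat a^i_{t,i}$. - Each agent $i$ moves to $s^i_{t+1}\sim\mathcal{T}^i(s^i_t,\cdot)$ under the action it executed. $\Gamma^{int}_\Lambda$ denotes the induced distribution over realized joint paths. $KL$ is Kullback–Leibler divergence. *)

theory Defs
  imports "HOL-Probability.Probability"
begin

text \<open>Agents are indexed by 0..<N. Joint states / joint actions are
  functions on {..<N} (extensional: value undefined outside {..<N}).\<close>

type_synonym ('s,'a) step = "(nat \<Rightarrow> 's) \<times> (nat \<Rightarrow> 'a)"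

definition joint_T :: "nat \<Rightarrow> (nat \<Rightarrow> 's \<Rightarrow> 'a \<Rightarrow> 's pmf) \<Rightarrow> (nat \<Rightarrow> 's) \<Rightarrow> (nat \<Rightarrow> 'a) \<Rightarrow> (nat \<Rightarrow> 's) pmf" where
  "joint_T N T s a = Pi_pmf {..<N} undefined (\<lambda>i. T i (s i) (a i))"

definition full_step ::
  "nat \<Rightarrow> (nat \<Rightarrow> 's \<Rightarrow> 'a \<Rightarrow> 's pmf) \<Rightarrow> ((nat \<Rightarrow> 's) \<Rightarrow> (nat \<Rightarrow> 'a) pmf)
   \<Rightarrow> (nat \<Rightarrow> 's) \<Rightarrow> (('s,'a) step \<times> (nat \<Rightarrow> 's)) pmf" where
  "full_step N T \<pi> s =
     bind_pmf (\<pi> s) (\<lambda>a. bind_pmf (joint_T N T s a) (\<lambda>s'. return_pmf ((s, a), s')))"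

fun full_prefix_st ::
  "nat \<Rightarrow> (nat \<Rightarrow> 's) \<Rightarrow> (nat \<Rightarrow> 's \<Rightarrow> 'a \<Rightarrow> 's pmf) \<Rightarrow> ((nat \<Rightarrow> 's) \<Rightarrow> (nat \<Rightarrow> 'a) pmf)
   \<Rightarrow> nat \<Rightarrow> (('s,'a) step list \<times> (nat \<Rightarrow> 's)) pmf" where
  "full_prefix_st N sI T \<pi> 0 = return_pmf ([], restrict sI {..<N})"
| "full_prefix_st N sI T \<pi> (Suc n) =
     bind_pmf (full_prefix_st N sI T \<pi> n) (\<lambda>(p, s).
       map_pmf (\<lambda>(x, s'). (p @ [x], s')) (full_step N T \<pi> s))"

definition full_prefix where
  "full_prefix N sI T \<pi> n = map_pmf fst (full_prefix_st N sI T \<pi> n)"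

text \<open>Internal state:
  (true joint state s, hs, ha) where hs i j is agent i's record of agent j's state
  at the previous time step and ha i is agent i's joint action recorded at the
  previous time step.\<close>
definition int_step ::
  "nat \<Rightarrow> (nat \<Rightarrow> 's) \<Rightarrow> (nat \<Rightarrow> 's \<Rightarrow> 'a \<Rightarrow> 's pmf) \<Rightarrow> ((nat \<Rightarrow> 's) \<Rightarrow> (nat \<Rightarrow> 'a) pmf)
   \<Rightarrow> bool \<Rightarrow> nat \<Rightarrow> (nat \<Rightarrow> 's) \<times> (nat \<Rightarrow> nat \<Rightarrow> 's) \<times> (nat \<Rightarrow> nat \<Rightarrow> 'a)
   \<Rightarrow> (('s,'a) step \<times> ((nat \<Rightarrow> 's) \<times> (nat \<Rightarrow> nat \<Rightarrow> 's) \<times> (nat \<Rightarrow> nat \<Rightarrow> 'a))) pmf" where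
  "int_step N sI T \<pi> lam t st =
    (case st of (s, hs, ha) \<Rightarrow>
     if lam then
       bind_pmf (\<pi> s) (\<lambda>a. bind_pmf (joint_T N T s a) (\<lambda>s'.
         return_pmf ((s, a), (s', \<lambda>i. s, \<lambda>i. a))))
     else
       bind_pmf
         (Pi_pmf {..<N} undefined (\<lambda>i.
            if t = 0 then return_pmf (restrict sI {..<N})
            else Pi_pmf ({..<N} - {i}) undefined (\<lambda>j. T j (hs i j) (ha i j))))
         (\<lambda>hs'. bind_pmf
           (Pi_pmf {..<N} undefined (\<lambda>i. \<pi> ((hs' i)(i := s i))))
           (\<lambda>ha'. let a = (\<lambda>i. if i < N then ha' i i else undefined) in
              bind_pmf (joint_T N T s a) (\<lambda>s'.
                return_pmf ((s, a), (s', hs', ha'))))))"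

fun int_prefix_st ::
  "nat \<Rightarrow> (nat \<Rightarrow> 's) \<Rightarrow> (nat \<Rightarrow> 's \<Rightarrow> 'a \<Rightarrow> 's pmf) \<Rightarrow> ((nat \<Rightarrow> 's) \<Rightarrow> (nat \<Rightarrow> 'a) pmf)
   \<Rightarrow> (nat \<Rightarrow> bool) \<Rightarrow> nat
   \<Rightarrow> (('s,'a) step list \<times> ((nat \<Rightarrow> 's) \<times> (nat \<Rightarrow> nat \<Rightarrow> 's) \<times> (nat \<Rightarrow> nat \<Rightarrow> 'a))) pmf" where
  "int_prefix_st N sI T \<pi> \<Lambda> 0 =
     return_pmf ([], (restrict sI {..<N}, \<lambda>i. restrict sI {..<N}, \<lambda>i. undefined))"
| "int_prefix_st N sI T \<pi> \<Lambda> (Suc n) =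
     bind_pmf (int_prefix_st N sI T \<pi> \<Lambda> n) (\<lambda>(p, st).
       map_pmf (\<lambda>(x, st'). (p @ [x], st')) (int_step N sI T \<pi> (\<Lambda> n) n st))"

text \<open>Length-n prefix marginal of \<Gamma>^int_\<Lambda> (\<Lambda> t = True means \<lambda>_t = 1).\<close>
definition int_prefix where
  "int_prefix N sI T \<pi> \<Lambda> n = map_pmf fst (int_prefix_st N sI T \<pi> \<Lambda> n)"

definition img_prefix where
  "img_prefix N sI T \<pi> (tloss :: enat) n = int_prefix N sI T \<pi> (\<lambda>t. enat t < tloss) n"

text \<open>Length-n prefix marginal of the mixture E_\<Lambda>[\<Gamma>^int_\<Lambda>], \<lambda>_t i.i.d. with
  Pr(\<lambda>_t = 1) = 1 - q (the prefix of length n only depends on \<lambda>_0..\<lambda>_{n-1}).\<close>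
definition int_mix_prefix where
  "int_mix_prefix N sI T \<pi> (q :: real) n =
     bind_pmf (Pi_pmf {..<n} False (\<lambda>_. bernoulli_pmf (1 - q)))
       (\<lambda>\<Lambda>. int_prefix N sI T \<pi> \<Lambda> n)"

definition pmf_KL :: "'a pmf \<Rightarrow> 'a pmf \<Rightarrow> ereal" where
  "pmf_KL P Q =
    (if \<exists>x\<in>set_pmf P. pmf Q x = 0 then \<infinity>
     else ereal (\<Sum>x\<in>set_pmf P. pmf P x * ln (pmf P x / pmf Q x)))"

text \<open>KL divergence of two distributions over infinite joint paths, given by
  their families of finite-prefix marginals: the supremum (= limit) of the
  KL divergences of the finite-dimensional marginals.\<close>
definition path_KL :: "(nat \<Rightarrow> 'a pmf) \<Rightarrow> (nat \<Rightarrow> 'a pmf) \<Rightarrow> ereal" where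
  "path_KL P Q = (SUP n. pmf_KL (P n) (Q n))"

definition wf_game where
  "wf_game N S sI A T \<pi> \<longleftrightarrow>
     (\<forall>i<N. finite (S i) \<and> sI i \<in> S i \<and> finite (A i) \<and> A i \<noteq> {} \<and>
        (\<forall>s\<in>S i. \<forall>a\<in>A i. set_pmf (T i s a) \<subseteq> S i)) \<and>
     (\<forall>s\<in>PiE {..<N} S. set_pmf (\<pi> s) \<subseteq> PiE {..<N} A)"

end

theory Submission
  imports Defs
begin

text \<open>Intermittent communication is the game played with a history-dependent joint policy:
  at a silent step the agents act independently, each according to its predictive law, which
  it obtains by Bayesian filtering of its private record given what it has observed. By the
  chain rule the KL divergence from full play is the sum over time of the expected
  log-likelihood ratios of \<open>\<pi>\<close> against this policy. Communication steps contribute nothing;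
  at a silent step the ratio splits over the agents. The filter is exact: under full play,
  agent \<open>i\<close>'s imagined teammate states have the conditional law of the true ones given its
  information. So its predictive law is the true conditional law of its action given its
  information, and by Gibbs' inequality it does at least as well as the predictive law of an
  agent that never communicates, whose information is coarser. Every term is therefore
  dominated by the corresponding (nonnegative) term for \<open>t_loss = 0\<close>. For random \<open>\<Lambda>\<close>,
  convexity of KL divergence bounds the mixture by the average over \<open>\<Lambda>\<close>, and each step is
  silent with probability \<open>q\<close>.\<close>

section \<open>Finite expectations and conditional laws\<close>

text \<open>Expectation as a finite sum; it is only meaningful for finitely supported \<open>M\<close>.\<close>
definition pmf_expect :: "'a pmf \<Rightarrow> ('a \<Rightarrow> real) \<Rightarrow> real" where
  "pmf_expect M f = (\<Sum>x\<in>set_pmf M. pmf M x * f x)"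

lemma pmf_expect_eq_expectation:
  "finite (set_pmf M) \<Longrightarrow> pmf_expect M f = measure_pmf.expectation M f"
  unfolding pmf_expect_def
  by (subst integral_measure_pmf_real[of "set_pmf M"]) (auto simp: mult.commute)

lemma pmf_expect_cong:
  "(\<And>x. x \<in> set_pmf M \<Longrightarrow> f x = g x) \<Longrightarrow> pmf_expect M f = pmf_expect M g"
  unfolding pmf_expect_def by (intro sum.cong) auto

lemma pmf_expect_mono:
  "(\<And>x. x \<in> set_pmf M \<Longrightarrow> f x \<le> g x) \<Longrightarrow> pmf_expect M f \<le> pmf_expect M g"
  unfolding pmf_expect_def by (intro sum_mono mult_left_mono) auto

lemma pmf_expect_diff: "pmf_expect M (\<lambda>x. f x - g x) = pmf_expect M f - pmf_expect M g"
  unfolding pmf_expect_def by (simp add: algebra_simps sum_subtractf)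

lemma pmf_expect_sum: "pmf_expect M (\<lambda>x. \<Sum>i\<in>I. f i x) = (\<Sum>i\<in>I. pmf_expect M (f i))"
  unfolding pmf_expect_def by (simp add: sum_distrib_left sum.swap[of _ I])

lemma pmf_expect_cmult: "pmf_expect M (\<lambda>x. c * f x) = c * pmf_expect M f"
  unfolding pmf_expect_def by (simp add: sum_distrib_left algebra_simps)

lemma pmf_expect_const: "finite (set_pmf M) \<Longrightarrow> pmf_expect M (\<lambda>x. c) = c"
  unfolding pmf_expect_def using sum_pmf_eq_1[of "set_pmf M" M]
  by (simp add: sum_distrib_right[symmetric])

lemma pmf_bind_finite_support:
  assumes "finite (set_pmf M)"
  shows "pmf (bind_pmf M K) y = (\<Sum>x\<in>set_pmf M. pmf M x * pmf (K x) y)"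
  unfolding pmf_bind using assms
  by (subst integral_measure_pmf_real[of "set_pmf M"]) (auto simp: mult.commute)

lemma pmf_expect_bind:
  assumes fin_M: "finite (set_pmf M)"
    and fin_K: "\<And>x. x \<in> set_pmf M \<Longrightarrow> finite (set_pmf (K x))"
  shows "pmf_expect (bind_pmf M K) f = pmf_expect M (\<lambda>x. pmf_expect (K x) f)"
proof -
  define Y where "Y = set_pmf (bind_pmf M K)"
  have fin_Y: "finite Y" using assms by (auto simp: Y_def)
  have "pmf_expect (bind_pmf M K) f = (\<Sum>y\<in>Y. (\<Sum>x\<in>set_pmf M. pmf M x * pmf (K x) y) * f y)"
    unfolding pmf_expect_def Y_def using fin_M by (simp add: pmf_bind_finite_support)
  also have "\<dots> = (\<Sum>x\<in>set_pmf M. pmf M x * (\<Sum>y\<in>Y. pmf (K x) y * f y))"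
    by (simp add: sum_distrib_right sum_distrib_left sum.swap[of _ Y] algebra_simps)
  also have "\<dots> = (\<Sum>x\<in>set_pmf M. pmf M x * pmf_expect (K x) f)"
  proof (intro sum.cong refl arg_cong[where f="\<lambda>z. _ * z"])
    fix x assume "x \<in> set_pmf M"
    then have "set_pmf (K x) \<subseteq> Y" by (auto simp: Y_def)
    then show "(\<Sum>y\<in>Y. pmf (K x) y * f y) = pmf_expect (K x) f"
      unfolding pmf_expect_def using fin_Y
      by (intro sum.mono_neutral_right) (auto simp: set_pmf_eq)
  qed
  finally show ?thesis by (simp add: pmf_expect_def)
qed

lemma pmf_expect_map:
  "finite (set_pmf M) \<Longrightarrow> pmf_expect (map_pmf g M) f = pmf_expect M (\<lambda>x. f (g x))"
  unfolding map_pmf_def by (subst pmf_expect_bind) (auto simp: pmf_expect_def)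

lemma pmf_bind_determined:
  assumes "\<And>y z. z \<in> set_pmf (K y) \<Longrightarrow> g z = y"
  shows "pmf (bind_pmf M K) x = pmf M (g x) * pmf (K (g x)) x"
proof -
  have "pmf (bind_pmf M K) x = measure_pmf.expectation M (\<lambda>y. pmf (K y) x)"
    by (rule pmf_bind)
  also have "\<dots> = measure_pmf.expectation M (\<lambda>y. indicator {g x} y * pmf (K (g x)) x)"
    by (intro Bochner_Integration.integral_cong refl)
       (auto simp: indicator_def pmf_eq_0_set_pmf dest: assms)
  also have "\<dots> = pmf M (g x) * pmf (K (g x)) x"
    by (simp add: measure_pmf_single)
  finally show ?thesis .
qed

lemma bind_cond_pmf_fst: "bind_pmf (map_pmf fst W) (\<lambda>u. cond_pmf W {z. fst z = u}) = W"
  by (rule bind_cond_pmf_cancel)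
     (auto simp: pmf_map vimage_def measure_pmf_single intro!: arg_cong[where f="measure_pmf.prob W"])

lemma bind_cond_pmf_fst_snd:
  assumes "u \<in> set_pmf (map_pmf fst W)"
  shows "bind_pmf (cond_pmf W {z. fst z = u}) (\<lambda>z. G (fst z) (snd z)) =
         bind_pmf (map_pmf snd (cond_pmf W {z. fst z = u})) (G u)"
proof -
  have "set_pmf W \<inter> {z. fst z = u} \<noteq> {}" using assms by auto
  then show ?thesis unfolding bind_map_pmf
    by (intro bind_pmf_cong refl) (auto simp: set_cond_pmf)
qed

lemma bind_pmf_resample_snd:
  "bind_pmf W (\<lambda>z. F (fst z) (snd z)) =
   bind_pmf W (\<lambda>z. bind_pmf (map_pmf snd (cond_pmf W {z'. fst z' = fst z})) (F (fst z)))"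
proof -
  define C where "C u = cond_pmf W {z. fst z = u}" for u
  have C_fst: "bind_pmf (C u) (\<lambda>z. H (fst z)) = H u" if "u \<in> set_pmf (map_pmf fst W)" for H u
    using bind_cond_pmf_fst_snd[OF that, of "\<lambda>u _. H u"] by (simp add: C_def)
  have "bind_pmf W (\<lambda>z. F (fst z) (snd z)) = bind_pmf (map_pmf fst W) (\<lambda>u. bind_pmf (C u) (\<lambda>z. F (fst z) (snd z)))"
    by (subst (1) bind_cond_pmf_fst[symmetric]) (simp add: bind_assoc_pmf C_def)
  also have "\<dots> = bind_pmf (map_pmf fst W) (\<lambda>u. bind_pmf (map_pmf snd (C u)) (F u))"
    unfolding C_def by (intro bind_pmf_cong refl bind_cond_pmf_fst_snd)
  also have "\<dots> = bind_pmf (map_pmf fst W) (\<lambda>u. bind_pmf (C u) (\<lambda>z. bind_pmf (map_pmf snd (C (fst z))) (F (fst z))))"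
    by (intro bind_pmf_cong refl) (rule C_fst[symmetric])
  also have "\<dots> = bind_pmf W (\<lambda>z. bind_pmf (map_pmf snd (cond_pmf W {z'. fst z' = fst z})) (F (fst z)))"
    by (subst (2) bind_cond_pmf_fst[symmetric]) (simp add: bind_assoc_pmf C_def)
  finally show ?thesis .
qed

lemma Pi_pmf_map_dependent:
  assumes "finite A"
  shows "Pi_pmf A d (\<lambda>i. map_pmf (f i) (P i)) =
         map_pmf (\<lambda>h i. if i \<in> A then f i (h i) else d) (Pi_pmf A d' P)"
proof -
  have "Pi_pmf A d (\<lambda>i. map_pmf (f i) (P i)) = Pi_pmf A d (\<lambda>i. bind_pmf (P i) (\<lambda>x. return_pmf (f i x)))"
    by (simp add: map_pmf_def)
  also have "\<dots> = bind_pmf (Pi_pmf A d' P) (\<lambda>h. Pi_pmf A d (\<lambda>i. return_pmf (f i (h i))))"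
    using assms by (rule Pi_pmf_bind)
  finally show ?thesis using assms by (simp add: map_pmf_def)
qed

lemma Pi_pmf_bind_Pair:
  assumes fin: "finite A"
  shows "bind_pmf (Pi_pmf A d M) (\<lambda>h. bind_pmf (Pi_pmf A e (\<lambda>i. K i (h i))) (G h)) =
         bind_pmf (Pi_pmf A (d, e) (\<lambda>i. bind_pmf (M i) (\<lambda>x. map_pmf (Pair x) (K i x))))
           (\<lambda>w. G (\<lambda>i. fst (w i)) (\<lambda>i. snd (w i)))"
proof -
  have "Pi_pmf A (d, e) (\<lambda>i. bind_pmf (M i) (\<lambda>x. map_pmf (Pair x) (K i x))) =
        bind_pmf (Pi_pmf A d M) (\<lambda>h. Pi_pmf A (d, e) (\<lambda>i. map_pmf (Pair (h i)) (K i (h i))))"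
    using fin by (rule Pi_pmf_bind)
  also have "\<dots> = bind_pmf (Pi_pmf A d M) (\<lambda>h. map_pmf (\<lambda>g i. if i \<in> A then (h i, g i) else (d, e))
                     (Pi_pmf A e (\<lambda>i. K i (h i))))"
    using fin by (simp only: Pi_pmf_map_dependent[where d'=e])
  finally have eq: "Pi_pmf A (d, e) (\<lambda>i. bind_pmf (M i) (\<lambda>x. map_pmf (Pair x) (K i x))) = \<dots>" .
  show ?thesis
    unfolding eq bind_assoc_pmf bind_map_pmf
  proof (intro bind_pmf_cong refl)
    fix h g assume h: "h \<in> set_pmf (Pi_pmf A d M)" and g: "g \<in> set_pmf (Pi_pmf A e (\<lambda>i. K i (h i)))"
    have "h \<in> {f. \<forall>x. x \<notin> A \<longrightarrow> f x = d}" "g \<in> {f. \<forall>x. x \<notin> A \<longrightarrow> f x = e}"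
      using subsetD[OF set_Pi_pmf_subset[OF fin] h] subsetD[OF set_Pi_pmf_subset[OF fin] g] .
    then have "(\<lambda>i. fst (if i \<in> A then (h i, g i) else (d, e))) = h"
      "(\<lambda>i. snd (if i \<in> A then (h i, g i) else (d, e))) = g"
      by (simp_all add: fun_eq_iff)
    then show "G h g = G (\<lambda>i. fst (if i \<in> A then (h i, g i) else (d, e)))
                         (\<lambda>i. snd (if i \<in> A then (h i, g i) else (d, e)))"
      by simp
  qed
qed

text \<open>\<open>c x\<close> is the conditional law of \<open>g\<close> given \<open>f\<close> under \<open>J\<close>, as a kernel that depends
  on \<open>x\<close> only through \<open>f x\<close>.\<close>
definition cond_law :: "'a pmf \<Rightarrow> ('a \<Rightarrow> 'b) \<Rightarrow> ('a \<Rightarrow> 'c) \<Rightarrow> ('a \<Rightarrow> 'c pmf) \<Rightarrow> bool" where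
  "cond_law J f g c \<longleftrightarrow>
     (\<forall>x\<in>set_pmf J. \<forall>y\<in>set_pmf J. f x = f y \<longrightarrow> c x = c y) \<and>
     map_pmf (\<lambda>x. (f x, g x)) J = bind_pmf J (\<lambda>x. map_pmf (Pair (f x)) (c x))"

lemma cond_law_map:
  assumes "cond_law (map_pmf h J) f g c"
  shows "cond_law J (\<lambda>x. f (h x)) (\<lambda>x. g (h x)) (\<lambda>x. c (h x))"
proof -
  have meas: "\<forall>x\<in>set_pmf (map_pmf h J). \<forall>y\<in>set_pmf (map_pmf h J). f x = f y \<longrightarrow> c x = c y"
    and dis: "map_pmf (\<lambda>y. (f y, g y)) (map_pmf h J) = bind_pmf (map_pmf h J) (\<lambda>y. map_pmf (Pair (f y)) (c y))"
    using assms unfolding cond_law_def by blast+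
  have "map_pmf (\<lambda>x. (f (h x), g (h x))) J = map_pmf (\<lambda>y. (f y, g y)) (map_pmf h J)"
    by (simp add: pmf.map_comp o_def)
  also have "\<dots> = bind_pmf J (\<lambda>x. map_pmf (Pair (f (h x))) (c (h x)))"
    unfolding dis by (simp add: bind_map_pmf)
  finally have "map_pmf (\<lambda>x. (f (h x), g (h x))) J = bind_pmf J (\<lambda>x. map_pmf (Pair (f (h x))) (c (h x)))" .
  moreover have "\<forall>x\<in>set_pmf J. \<forall>y\<in>set_pmf J. f (h x) = f (h y) \<longrightarrow> c (h x) = c (h y)"
  proof (intro ballI impI)
    fix x y assume "x \<in> set_pmf J" "y \<in> set_pmf J" "f (h x) = f (h y)"
    moreover have "h x \<in> set_pmf (map_pmf h J)" "h y \<in> set_pmf (map_pmf h J)"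
      using calculation(1,2) by simp_all
    ultimately show "c (h x) = c (h y)" using meas by blast
  qed
  ultimately show ?thesis unfolding cond_law_def by blast
qed

lemma cond_law_cong:
  assumes "cond_law J f g c"
    and "\<And>x. x \<in> set_pmf J \<Longrightarrow> f' x = f x" "\<And>x. x \<in> set_pmf J \<Longrightarrow> g' x = g x"
    "\<And>x. x \<in> set_pmf J \<Longrightarrow> c' x = c x"
  shows "cond_law J f' g' c'"
proof -
  have meas: "\<forall>x\<in>set_pmf J. \<forall>y\<in>set_pmf J. f x = f y \<longrightarrow> c x = c y"
    and dis: "map_pmf (\<lambda>x. (f x, g x)) J = bind_pmf J (\<lambda>x. map_pmf (Pair (f x)) (c x))"
    using assms(1) unfolding cond_law_def by blast+
  have "map_pmf (\<lambda>x. (f' x, g' x)) J = map_pmf (\<lambda>x. (f x, g x)) J"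
    using assms(2,3) by (intro map_pmf_cong) auto
  also have "\<dots> = bind_pmf J (\<lambda>x. map_pmf (Pair (f' x)) (c' x))"
    unfolding dis using assms(2,4) by (intro bind_pmf_cong) auto
  finally have "map_pmf (\<lambda>x. (f' x, g' x)) J = bind_pmf J (\<lambda>x. map_pmf (Pair (f' x)) (c' x))" .
  moreover have "\<forall>x\<in>set_pmf J. \<forall>y\<in>set_pmf J. f' x = f' y \<longrightarrow> c' x = c' y"
  proof (intro ballI impI)
    fix x y assume "x \<in> set_pmf J" "y \<in> set_pmf J" "f' x = f' y"
    then show "c' x = c' y" using meas assms(2,4)[of x] assms(2,4)[of y] by metis
  qed
  ultimately show ?thesis unfolding cond_law_def by blast
qed

lemma cond_law_pmf_pos:
  assumes "cond_law J f g c" "x \<in> set_pmf J"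
  shows "pmf (c x) (g x) > 0"
proof -
  have dis: "map_pmf (\<lambda>x. (f x, g x)) J = bind_pmf J (\<lambda>x. map_pmf (Pair (f x)) (c x))"
    and meas: "\<And>y. y \<in> set_pmf J \<Longrightarrow> f y = f x \<Longrightarrow> c y = c x"
    using assms unfolding cond_law_def by blast+
  have "(f x, g x) \<in> set_pmf (map_pmf (\<lambda>x. (f x, g x)) J)" using assms(2) by auto
  then obtain y where "y \<in> set_pmf J" "f y = f x" "g x \<in> set_pmf (c y)"
    unfolding dis by auto
  then show ?thesis using meas by (simp add: pmf_positive)
qed

lemma cond_law_finite:
  assumes "finite (set_pmf J)" "cond_law J f g c" "x \<in> set_pmf J"
  shows "finite (set_pmf (c x))"
proof (rule finite_subset)
  have "map_pmf (\<lambda>x. (f x, g x)) J = bind_pmf J (\<lambda>x. map_pmf (Pair (f x)) (c x))"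
    using assms(2) unfolding cond_law_def by blast
  then show "set_pmf (c x) \<subseteq> snd ` set_pmf (map_pmf (\<lambda>x. (f x, g x)) J)"
    using assms(3) by force
qed (use assms(1) in simp)

lemma cond_law_expect:
  assumes fin: "finite (set_pmf J)" and law: "cond_law J f g c"
    and meas: "\<And>x y b. x \<in> set_pmf J \<Longrightarrow> y \<in> set_pmf J \<Longrightarrow> f x = f y \<Longrightarrow> \<Psi> x b = \<Psi> y b"
  shows "pmf_expect J (\<lambda>x. \<Psi> x (g x)) = pmf_expect J (\<lambda>x. pmf_expect (c x) (\<Psi> x))"
proof -
  define rep where "rep v = (SOME x. x \<in> set_pmf J \<and> f x = v)" for v
  have rep: "rep (f x) \<in> set_pmf J \<and> f (rep (f x)) = f x" if "x \<in> set_pmf J" for x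
    unfolding rep_def by (rule someI[of _ x]) (use that in auto)
  define \<Psi>' where "\<Psi>' = (\<lambda>(v, b). \<Psi> (rep v) b)"
  have "pmf_expect J (\<lambda>x. \<Psi> x (g x)) = pmf_expect J (\<lambda>x. \<Psi>' (f x, g x))"
    by (intro pmf_expect_cong) (auto simp: \<Psi>'_def dest: rep intro: meas[symmetric])
  also have "\<dots> = pmf_expect (map_pmf (\<lambda>x. (f x, g x)) J) \<Psi>'"
    using fin by (simp add: pmf_expect_map)
  also have "\<dots> = pmf_expect (bind_pmf J (\<lambda>x. map_pmf (Pair (f x)) (c x))) \<Psi>'"
    using law unfolding cond_law_def by (simp only:)
  also have "\<dots> = pmf_expect J (\<lambda>x. pmf_expect (map_pmf (Pair (f x)) (c x)) \<Psi>')"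
    using fin cond_law_finite[OF fin law] by (intro pmf_expect_bind) auto
  also have "\<dots> = pmf_expect J (\<lambda>x. pmf_expect (c x) (\<Psi> x))"
  proof (intro pmf_expect_cong)
    fix x assume x: "x \<in> set_pmf J"
    have "\<Psi> (rep (f x)) = \<Psi> x" using rep[OF x] x by (intro ext meas) auto
    then show "pmf_expect (map_pmf (Pair (f x)) (c x)) \<Psi>' = pmf_expect (c x) (\<Psi> x)"
      using cond_law_finite[OF fin law x] by (simp add: pmf_expect_map \<Psi>'_def)
  qed
  finally show ?thesis .
qed

lemma cond_law_gibbs:
  assumes fin: "finite (set_pmf J)" and law: "cond_law J f g c"
    and d_meas: "\<And>x y. x \<in> set_pmf J \<Longrightarrow> y \<in> set_pmf J \<Longrightarrow> f x = f y \<Longrightarrow> d x = d y"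
    and d_pos: "\<And>x. x \<in> set_pmf J \<Longrightarrow> pmf (d x) (g x) > 0"
  shows "pmf_expect J (\<lambda>x. ln (pmf (d x) (g x))) \<le> pmf_expect J (\<lambda>x. ln (pmf (c x) (g x)))"
proof -
  note c_pos = cond_law_pmf_pos[OF law]
  have "pmf_expect J (\<lambda>x. ln (pmf (d x) (g x))) - pmf_expect J (\<lambda>x. ln (pmf (c x) (g x)))
      = pmf_expect J (\<lambda>x. ln (pmf (d x) (g x)) - ln (pmf (c x) (g x)))"
    by (rule pmf_expect_diff[symmetric])
  also have "\<dots> = pmf_expect J (\<lambda>x. ln (pmf (d x) (g x) / pmf (c x) (g x)))"
  proof (intro pmf_expect_cong)
    fix x assume x: "x \<in> set_pmf J"
    show "ln (pmf (d x) (g x)) - ln (pmf (c x) (g x)) = ln (pmf (d x) (g x) / pmf (c x) (g x))"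
      using d_pos[OF x] c_pos[OF x] by (simp add: ln_div)
  qed
  also have "\<dots> \<le> pmf_expect J (\<lambda>x. pmf (d x) (g x) / pmf (c x) (g x) - 1)"
    by (intro pmf_expect_mono ln_le_minus_one divide_pos_pos d_pos c_pos)
  also have "\<dots> = pmf_expect J (\<lambda>x. pmf_expect (c x) (\<lambda>b. pmf (d x) b / pmf (c x) b)) - 1"
  proof -
    have "pmf_expect J (\<lambda>x. pmf (d x) (g x) / pmf (c x) (g x))
        = pmf_expect J (\<lambda>x. pmf_expect (c x) (\<lambda>b. pmf (d x) b / pmf (c x) b))"
    proof (rule cond_law_expect[OF fin law])
      fix x y b assume xy: "x \<in> set_pmf J" "y \<in> set_pmf J" "f x = f y"
      then have "c x = c y" using law unfolding cond_law_def by blast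
      then show "pmf (d x) b / pmf (c x) b = pmf (d y) b / pmf (c y) b" using d_meas[OF xy] by simp
    qed
    then show ?thesis using fin by (simp add: pmf_expect_diff pmf_expect_const)
  qed
  also have "\<dots> \<le> pmf_expect J (\<lambda>x. 1) - 1"
  proof (intro diff_right_mono pmf_expect_mono)
    fix x assume x: "x \<in> set_pmf J"
    have "pmf_expect (c x) (\<lambda>b. pmf (d x) b / pmf (c x) b) = (\<Sum>b\<in>set_pmf (c x). pmf (d x) b)"
      unfolding pmf_expect_def by (intro sum.cong) (auto simp: set_pmf_eq)
    also have "\<dots> = measure_pmf.prob (d x) (set_pmf (c x))"
      using cond_law_finite[OF fin law x] by (simp add: measure_measure_pmf_finite)
    finally show "pmf_expect (c x) (\<lambda>b. pmf (d x) b / pmf (c x) b) \<le> 1" by simp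
  qed
  finally show ?thesis using fin by (simp add: pmf_expect_const)
qed

lemma ln_pmf_expect_ge:
  assumes fin: "finite (set_pmf B)" and pos: "\<And>b. b \<in> set_pmf B \<Longrightarrow> h b > 0"
  shows "pmf_expect B (\<lambda>b. ln (h b)) \<le> ln (pmf_expect B h)"
proof -
  define m where "m = pmf_expect B h"
  obtain b0 where b0: "b0 \<in> set_pmf B" using set_pmf_not_empty[of B] by blast
  have "0 < pmf B b0 * h b0" using b0 pos[OF b0] by (simp add: pmf_positive)
  also have "\<dots> \<le> m" unfolding m_def pmf_expect_def
  proof (rule member_le_sum)
    fix b assume "b \<in> set_pmf B - {b0}"
    then show "0 \<le> pmf B b * h b" using pos[of b] by simp
  qed (use b0 fin in auto)
  finally have m_pos: "m > 0" .
  have "pmf_expect B (\<lambda>b. ln (h b)) - ln m = pmf_expect B (\<lambda>b. ln (h b) - ln m)"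
    using fin by (simp add: pmf_expect_diff pmf_expect_const)
  also have "\<dots> = pmf_expect B (\<lambda>b. ln (h b / m))"
  proof (intro pmf_expect_cong)
    fix b assume "b \<in> set_pmf B"
    then show "ln (h b) - ln m = ln (h b / m)" using pos[of b] m_pos by (simp add: ln_div)
  qed
  also have "\<dots> \<le> pmf_expect B (\<lambda>b. (1 / m) * h b - 1)"
    by (intro pmf_expect_mono) (use pos m_pos in \<open>simp add: ln_le_minus_one\<close>)
  also have "\<dots> = 0"
  proof -
    have "pmf_expect B (\<lambda>b. (1 / m) * h b) = 1"
      using m_pos by (simp only: pmf_expect_cmult m_def[symmetric]) simp
    then show ?thesis using fin by (simp add: pmf_expect_diff pmf_expect_const)
  qed
  finally show ?thesis by (simp add: m_def)
qed

lemma pmf_KL_bind_le: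
  assumes fin_B: "finite (set_pmf B)"
    and pos: "\<And>b x. b \<in> set_pmf B \<Longrightarrow> x \<in> set_pmf P \<Longrightarrow> pmf (Q b) x > 0"
  shows "pmf_KL P (bind_pmf B Q) \<le>
         ereal (pmf_expect B (\<lambda>b. \<Sum>x\<in>set_pmf P. pmf P x * ln (pmf P x / pmf (Q b) x)))"
proof -
  have mix: "pmf (bind_pmf B Q) x = pmf_expect B (\<lambda>b. pmf (Q b) x)" for x
    unfolding pmf_expect_def by (simp add: pmf_bind_finite_support[OF fin_B] mult.commute)
  have jensen: "pmf_expect B (\<lambda>b. ln (pmf (Q b) x)) \<le> ln (pmf (bind_pmf B Q) x)" if "x \<in> set_pmf P" for x
    unfolding mix using fin_B pos that by (intro ln_pmf_expect_ge)
  have mix_pos: "pmf (bind_pmf B Q) x > 0" if "x \<in> set_pmf P" for x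
  proof -
    obtain b where b: "b \<in> set_pmf B" using set_pmf_not_empty[of B] by blast
    then have "x \<in> set_pmf (Q b)" using pos[OF b that] by (simp add: set_pmf_iff)
    with b have "x \<in> set_pmf (bind_pmf B Q)" by auto
    then show ?thesis by (simp add: pmf_positive)
  qed
  have "(\<Sum>x\<in>set_pmf P. pmf P x * ln (pmf P x / pmf (bind_pmf B Q) x))
      \<le> (\<Sum>x\<in>set_pmf P. pmf P x * (ln (pmf P x) - pmf_expect B (\<lambda>b. ln (pmf (Q b) x))))"
  proof (intro sum_mono mult_left_mono)
    fix x assume x: "x \<in> set_pmf P"
    then have "ln (pmf P x / pmf (bind_pmf B Q) x) = ln (pmf P x) - ln (pmf (bind_pmf B Q) x)"
      using mix_pos[OF x] pmf_positive[OF x] by (simp add: ln_div)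
    then show "ln (pmf P x / pmf (bind_pmf B Q) x) \<le> ln (pmf P x) - pmf_expect B (\<lambda>b. ln (pmf (Q b) x))"
      using jensen[OF x] by simp
  qed simp
  also have "\<dots> = pmf_expect B (\<lambda>b. \<Sum>x\<in>set_pmf P. pmf P x * (ln (pmf P x) - ln (pmf (Q b) x)))"
    using fin_B
    by (simp add: pmf_expect_sum pmf_expect_cmult[symmetric] pmf_expect_diff pmf_expect_const right_diff_distrib)
  also have "\<dots> = pmf_expect B (\<lambda>b. \<Sum>x\<in>set_pmf P. pmf P x * ln (pmf P x / pmf (Q b) x))"
  proof (intro pmf_expect_cong sum.cong refl)
    fix b x assume b: "b \<in> set_pmf B" and x: "x \<in> set_pmf P"
    show "pmf P x * (ln (pmf P x) - ln (pmf (Q b) x)) = pmf P x * ln (pmf P x / pmf (Q b) x)"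
      using pos[OF b x] pmf_positive[OF x] by (simp add: ln_div)
  qed
  finally have "(\<Sum>x\<in>set_pmf P. pmf P x * ln (pmf P x / pmf (bind_pmf B Q) x))
      \<le> pmf_expect B (\<lambda>b. \<Sum>x\<in>set_pmf P. pmf P x * ln (pmf P x / pmf (Q b) x))" .
  moreover have "\<not> (\<exists>x\<in>set_pmf P. pmf (bind_pmf B Q) x = 0)"
    using mix_pos by (metis less_irrefl)
  ultimately show ?thesis by (simp add: pmf_KL_def)
qed

section \<open>Play under history-dependent joint policies\<close>

locale coop_game =
  fixes N :: nat and sI :: "nat \<Rightarrow> 's" and T :: "nat \<Rightarrow> 's \<Rightarrow> 'a \<Rightarrow> 's pmf"
    and \<pi> :: "(nat \<Rightarrow> 's) \<Rightarrow> (nat \<Rightarrow> 'a) pmf"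
begin

abbreviation s0 where "s0 \<equiv> restrict sI {..<N}"
abbreviation JT where "JT \<equiv> joint_T N T"

primrec run_st :: "(nat \<Rightarrow> ('s,'a) step list \<Rightarrow> (nat \<Rightarrow> 's) \<Rightarrow> (nat \<Rightarrow> 'a) pmf) \<Rightarrow> nat
   \<Rightarrow> (('s,'a) step list \<times> (nat \<Rightarrow> 's)) pmf" where
  "run_st \<alpha> 0 = return_pmf ([], s0)"
| "run_st \<alpha> (Suc n) = bind_pmf (run_st \<alpha> n) (\<lambda>(p, s). bind_pmf (\<alpha> n p s) (\<lambda>a.
      map_pmf (\<lambda>s'. (p @ [(s, a)], s')) (JT s a)))"

declare run_st.simps(2)[simp del]

abbreviation run where "run \<alpha> n \<equiv> map_pmf fst (run_st \<alpha> n)"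

abbreviation full_st where "full_st \<equiv> run_st (\<lambda>_ _ s. \<pi> s)"

lemma full_prefix_st_eq_run_st: "full_prefix_st N sI T \<pi> n = full_st n"
  by (induction n)
     (auto simp: run_st.simps full_step_def map_bind_pmf map_pmf_def[symmetric] bind_return_pmf
        pmf.map_comp o_def intro!: bind_pmf_cong split: prod.splits)

lemma run_st_length: "(p, s) \<in> set_pmf (run_st \<alpha> n) \<Longrightarrow> length p = n"
  by (induction n arbitrary: p s) (auto simp: run_st.simps)

lemma run_st_Suc_bind:
  "bind_pmf (run_st \<alpha> (Suc n)) G = bind_pmf (run_st \<alpha> n) (\<lambda>(p, s).
     bind_pmf (\<alpha> n p s) (\<lambda>a. bind_pmf (JT s a) (\<lambda>s'. G (p @ [(s, a)], s'))))"
  unfolding run_st.simps bind_assoc_pmf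
  by (intro bind_pmf_cong refl) (simp add: split_beta bind_assoc_pmf bind_map_pmf)

lemma run_Suc:
  "run \<alpha> (Suc n) = bind_pmf (run_st \<alpha> n) (\<lambda>(p, s). map_pmf (\<lambda>a. p @ [(s, a)]) (\<alpha> n p s))"
  unfolding run_st.simps map_bind_pmf
  by (intro bind_pmf_cong refl)
     (auto simp: map_bind_pmf pmf.map_comp o_def map_pmf_const map_pmf_def[symmetric] split: prod.splits)

lemma run_take: "m \<le> n \<Longrightarrow> map_pmf (take m) (run \<alpha> n) = run \<alpha> m"
proof (induction n)
  case (Suc n)
  show ?case
  proof (cases "m = Suc n")
    case True
    show ?thesis unfolding True by (rule map_pmf_idI) (auto dest: run_st_length)
  next
    case False
    then have m: "m \<le> n" using Suc.prems by simp
    have "map_pmf (take m) (run \<alpha> (Suc n)) = map_pmf (take m) (run \<alpha> n)"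
      unfolding run_Suc map_bind_pmf map_pmf_def[of _ "run_st \<alpha> n"] bind_assoc_pmf
      using m by (intro bind_pmf_cong refl)
         (auto simp: pmf.map_comp o_def map_pmf_const bind_return_pmf dest!: run_st_length)
    then show ?thesis using Suc.IH m by simp
  qed
qed simp

definition state_law :: "('s,'a) step list \<Rightarrow> (nat \<Rightarrow> 's) pmf" where
  "state_law p = (if p = [] then return_pmf s0 else JT (fst (last p)) (snd (last p)))"

lemma state_law_Nil [simp]: "state_law [] = return_pmf s0"
  and state_law_snoc [simp]: "state_law (p @ [(s, a)]) = JT s a"
  by (simp_all add: state_law_def)

lemma run_st_eq_bind_state_law:
  "run_st \<alpha> n = bind_pmf (run \<alpha> n) (\<lambda>p. map_pmf (Pair p) (state_law p))"
proof (cases n)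
  case (Suc m)
  show ?thesis unfolding Suc run_Suc
    unfolding run_st.simps bind_assoc_pmf
    by (intro bind_pmf_cong refl)
       (auto simp: bind_map_pmf bind_return_pmf map_pmf_def bind_assoc_pmf split: prod.splits)
qed (simp add: bind_return_pmf)

lemma pmf_run_st: "pmf (run_st \<alpha> n) (p, s) = pmf (run \<alpha> n) p * pmf (state_law p) s"
proof -
  have "pmf (map_pmf (Pair p) (state_law p)) (p, s) = pmf (state_law p) s"
    by (rule pmf_map_inj') (auto simp: inj_def)
  then show ?thesis
    by (subst run_st_eq_bind_state_law, subst pmf_bind_determined[where g=fst]) auto
qed

lemma pmf_run_snoc:
  "pmf (run \<alpha> (Suc n)) (p @ [(s, a)]) = pmf (run \<alpha> n) p * pmf (state_law p) s * pmf (\<alpha> n p s) a"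
proof -
  have "pmf (run \<alpha> (Suc n)) (p @ [(s, a)]) =
     pmf (run_st \<alpha> n) (p, s) * pmf (map_pmf (\<lambda>a. p @ [(s, a)]) (\<alpha> n p s)) (p @ [(s, a)])"
    unfolding run_Suc
    by (subst pmf_bind_determined[where g="\<lambda>x. (butlast x, fst (last x))"]) (auto simp: split_beta)
  also have "pmf (map_pmf (\<lambda>a. p @ [(s, a)]) (\<alpha> n p s)) (p @ [(s, a)]) = pmf (\<alpha> n p s) a"
    by (rule pmf_map_inj') (auto simp: inj_def)
  finally show ?thesis by (simp add: pmf_run_st)
qed

lemma run_snocD:
  assumes "p @ [(s, a)] \<in> set_pmf (run \<alpha> (Suc n))"
  shows "(p, s) \<in> set_pmf (run_st \<alpha> n)" "a \<in> set_pmf (\<alpha> n p s)"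
  using assms unfolding run_Suc by auto

lemma JT_split:
  assumes "i < N"
  shows "JT s a = bind_pmf (T i (s i) (a i)) (\<lambda>x. map_pmf (\<lambda>h. h(i := x))
            (Pi_pmf ({..<N} - {i}) undefined (\<lambda>j. T j (s j) (a j))))"
proof -
  have "{..<N} = insert i ({..<N} - {i})" using assms by auto
  then show ?thesis unfolding joint_T_def
    by (subst (1) \<open>{..<N} = _\<close>, subst Pi_pmf_insert') (auto simp: map_pmf_def)
qed

lemma JT_own:
  assumes "i < N"
  shows "bind_pmf (JT s a) (\<lambda>s'. G (s' i)) = bind_pmf (T i (s i) (a i)) G"
  by (subst JT_split[OF assms]) (simp add: bind_map_pmf bind_assoc_pmf)

definition imagine :: "nat \<Rightarrow> nat \<Rightarrow> (nat \<Rightarrow> 's) \<times> (nat \<Rightarrow> 'a) \<Rightarrow> (nat \<Rightarrow> 's) pmf" where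
  "imagine n i r = (if n = 0 then return_pmf s0
      else Pi_pmf ({..<N} - {i}) undefined (\<lambda>j. T j (fst r j) (snd r j)))"

text \<open>A silent step of agent \<open>i\<close> whose record \<open>(hs, ha)\<close> of the previous step has law \<open>R\<close>:
  the law of its executed action together with its new record.\<close>
definition agent_draw :: "((nat \<Rightarrow> 's) \<times> (nat \<Rightarrow> 'a)) pmf \<Rightarrow> nat \<Rightarrow> nat \<Rightarrow> (nat \<Rightarrow> 's)
   \<Rightarrow> ('a \<times> (nat \<Rightarrow> 's) \<times> (nat \<Rightarrow> 'a)) pmf" where
  "agent_draw R i n s = bind_pmf R (\<lambda>r. bind_pmf (imagine n i r) (\<lambda>h.
       map_pmf (\<lambda>g. (g i, (h, g))) (\<pi> (h(i := s i)))))"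

text \<open>The conditional law of agent \<open>i\<close>'s record given the realised prefix \<open>p\<close> of length \<open>n\<close>:
  a communication step reveals it, a silent step updates it by Bayes' rule on the
  observed own action \<open>a i\<close>.\<close>
primrec belief :: "(nat \<Rightarrow> bool) \<Rightarrow> nat \<Rightarrow> nat \<Rightarrow> ('s,'a) step list
   \<Rightarrow> ((nat \<Rightarrow> 's) \<times> (nat \<Rightarrow> 'a)) pmf" where
  "belief \<Lambda> i 0 p = return_pmf (s0, undefined)"
| "belief \<Lambda> i (Suc n) p = (case last p of (s, a) \<Rightarrow>
     if \<Lambda> n then return_pmf (s, a)
     else map_pmf snd (cond_pmf (agent_draw (belief \<Lambda> i n (butlast p)) i n s) {z. fst z = a i}))"

abbreviation belief_draw where
  "belief_draw \<Lambda> i n p s \<equiv> agent_draw (belief \<Lambda> i n p) i n s"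

lemma belief_snoc:
  "belief \<Lambda> i (Suc n) (p @ [(s, a)]) =
   (if \<Lambda> n then return_pmf (s, a) else map_pmf snd (cond_pmf (belief_draw \<Lambda> i n p s) {z. fst z = a i}))"
  by simp

declare belief.simps(2)[simp del]

definition own_action where
  "own_action \<Lambda> i n p s = map_pmf fst (belief_draw \<Lambda> i n p s)"

definition int_policy where
  "int_policy \<Lambda> n p s = (if \<Lambda> n then \<pi> s else Pi_pmf {..<N} undefined (\<lambda>i. own_action \<Lambda> i n p s))"

lemma agent_draw_fst: "z \<in> set_pmf (agent_draw R i n s) \<Longrightarrow> fst z = snd (snd z) i"
  unfolding agent_draw_def by auto

lemma agent_draw_cong: "s i = s' i \<Longrightarrow> agent_draw R i n s = agent_draw R i n s'"
  unfolding agent_draw_def by simp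

lemma map_snd_belief_draw:
  "map_pmf snd (belief_draw \<Lambda> i n p s) = bind_pmf (own_action \<Lambda> i n p s)
      (\<lambda>u. map_pmf snd (cond_pmf (belief_draw \<Lambda> i n p s) {z. fst z = u}))"
  unfolding own_action_def
  by (subst (1) bind_cond_pmf_fst[symmetric]) (simp add: map_bind_pmf)

lemma set_cond_belief_draw:
  assumes "u \<in> set_pmf (own_action \<Lambda> i n p s)"
    and "w \<in> set_pmf (map_pmf snd (cond_pmf (belief_draw \<Lambda> i n p s) {z. fst z = u}))"
  shows "snd w i = u"
proof -
  have "set_pmf (belief_draw \<Lambda> i n p s) \<inter> {z. fst z = u} \<noteq> {}"
    using assms(1) by (auto simp: own_action_def)
  with assms(2) obtain z where "z \<in> set_pmf (belief_draw \<Lambda> i n p s)" "fst z = u" "w = snd z"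
    by auto
  then show ?thesis using agent_draw_fst[of z] by simp
qed

lemma int_step_comm:
  "int_step N sI T \<pi> True n (s, hs, ha) =
   bind_pmf (\<pi> s) (\<lambda>a. map_pmf (\<lambda>s'. ((s, a), (s', \<lambda>i. s, \<lambda>i. a))) (JT s a))"
  by (simp add: int_step_def map_pmf_def)

lemma int_step_silent:
  "int_step N sI T \<pi> False n (s, hs, ha) =
   bind_pmf (Pi_pmf {..<N} undefined (\<lambda>i. imagine n i (hs i, ha i))) (\<lambda>hs'.
     bind_pmf (Pi_pmf {..<N} undefined (\<lambda>i. \<pi> ((hs' i)(i := s i)))) (\<lambda>ha'.
       let a = restrict (\<lambda>i. ha' i i) {..<N} in map_pmf (\<lambda>s'. ((s, a), (s', hs', ha'))) (JT s a)))"
  by (simp add: int_step_def imagine_def restrict_def map_pmf_def Let_def cong: if_cong)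

text \<open>Records of the agents \<open>i \<ge> N\<close>, which the algorithm carries along as well.\<close>
primrec record_default :: "(nat \<Rightarrow> bool) \<Rightarrow> nat \<Rightarrow> ('s,'a) step list \<Rightarrow> (nat \<Rightarrow> 's) \<times> (nat \<Rightarrow> 'a)" where
  "record_default \<Lambda> 0 p = (s0, undefined)"
| "record_default \<Lambda> (Suc n) p = (if \<Lambda> n then last p else (undefined, undefined))"

definition int_state :: "('s,'a) step list \<Rightarrow> (nat \<Rightarrow> 's) \<Rightarrow> (nat \<Rightarrow> (nat \<Rightarrow> 's) \<times> (nat \<Rightarrow> 'a))
   \<Rightarrow> ('s,'a) step list \<times> ((nat \<Rightarrow> 's) \<times> (nat \<Rightarrow> nat \<Rightarrow> 's) \<times> (nat \<Rightarrow> nat \<Rightarrow> 'a))" where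
  "int_state p s z = (p, (s, \<lambda>i. fst (z i), \<lambda>i. snd (z i)))"

abbreviation records where
  "records \<Lambda> n p \<equiv> Pi_pmf {..<N} (record_default \<Lambda> n p) (\<lambda>i. belief \<Lambda> i n p)"

abbreviation int_step_from where
  "int_step_from \<Lambda> n p s z \<equiv> map_pmf (\<lambda>(x, st'). (p @ [x], st'))
      (int_step N sI T \<pi> (\<Lambda> n) n (s, \<lambda>i. fst (z i), \<lambda>i. snd (z i)))"

lemma int_step_records_comm:
  assumes "\<Lambda> n"
  shows "bind_pmf (Pi_pmf {..<N} d (\<lambda>i. belief \<Lambda> i n p)) (int_step_from \<Lambda> n p s)
   = bind_pmf (int_policy \<Lambda> n p s) (\<lambda>a. bind_pmf (JT s a) (\<lambda>s'.
       map_pmf (int_state (p @ [(s, a)]) s') (records \<Lambda> (Suc n) (p @ [(s, a)]))))"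
  using assms
  by (simp add: int_step_comm int_policy_def belief_snoc map_bind_pmf int_state_def pmf.map_comp o_def)
     (simp add: map_pmf_def)

definition silent_outcome where
  "silent_outcome p s hs ha = (let a = restrict (\<lambda>i. ha i i) {..<N} in
      map_pmf (\<lambda>s'. (p @ [(s, a)], (s', hs, ha))) (JT s a))"

lemma int_step_silent_records:
  assumes silent: "\<not> \<Lambda> n"
  shows "bind_pmf (Pi_pmf {..<N} d (\<lambda>i. belief \<Lambda> i n p)) (int_step_from \<Lambda> n p s)
   = bind_pmf (Pi_pmf {..<N} (undefined, undefined) (\<lambda>i. map_pmf snd (belief_draw \<Lambda> i n p s)))
      (\<lambda>w. silent_outcome p s (\<lambda>i. fst (w i)) (\<lambda>i. snd (w i)))"
proof -
  have fin: "finite {..<N}" by simp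
  have "bind_pmf (Pi_pmf {..<N} d (\<lambda>i. belief \<Lambda> i n p)) (int_step_from \<Lambda> n p s)
    = bind_pmf (Pi_pmf {..<N} d (\<lambda>i. belief \<Lambda> i n p)) (\<lambda>z.
        bind_pmf (Pi_pmf {..<N} undefined (\<lambda>i. imagine n i (z i))) (\<lambda>hs.
          bind_pmf (Pi_pmf {..<N} undefined (\<lambda>i. \<pi> ((hs i)(i := s i)))) (\<lambda>ha. silent_outcome p s hs ha)))"
    using silent by (simp add: int_step_silent silent_outcome_def map_bind_pmf Let_def pmf.map_comp o_def)
  also have "\<dots> = bind_pmf (Pi_pmf {..<N} undefined (\<lambda>i. bind_pmf (belief \<Lambda> i n p) (imagine n i)))
      (\<lambda>hs. bind_pmf (Pi_pmf {..<N} undefined (\<lambda>i. \<pi> ((hs i)(i := s i)))) (\<lambda>ha. silent_outcome p s hs ha))"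
    by (subst Pi_pmf_bind[OF fin, where d'=d]) (simp add: bind_assoc_pmf)
  also have "\<dots> = bind_pmf (Pi_pmf {..<N} (undefined, undefined) (\<lambda>i. map_pmf snd (belief_draw \<Lambda> i n p s)))
      (\<lambda>w. silent_outcome p s (\<lambda>i. fst (w i)) (\<lambda>i. snd (w i)))"
    by (subst Pi_pmf_bind_Pair[OF fin, where K="\<lambda>i h. \<pi> (h(i := s i))"])
       (simp add: agent_draw_def map_bind_pmf bind_assoc_pmf pmf.map_comp o_def)
  finally show ?thesis .
qed

text \<open>Each agent's new record is drawn from its belief conditioned on the action it took.\<close>
lemma silent_records_by_action:
  "bind_pmf (Pi_pmf {..<N} (undefined, undefined) (\<lambda>i. map_pmf snd (belief_draw \<Lambda> i n p s)))
      (\<lambda>w. silent_outcome p s (\<lambda>i. fst (w i)) (\<lambda>i. snd (w i)))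
   = bind_pmf (Pi_pmf {..<N} undefined (\<lambda>i. own_action \<Lambda> i n p s)) (\<lambda>a. bind_pmf (JT s a) (\<lambda>s'.
       map_pmf (int_state (p @ [(s, a)]) s') (Pi_pmf {..<N} (undefined, undefined)
         (\<lambda>i. map_pmf snd (cond_pmf (belief_draw \<Lambda> i n p s) {z. fst z = a i})))))"
    (is "_ = bind_pmf ?A (\<lambda>a. bind_pmf (JT s a) (\<lambda>s'. map_pmf _ (?C a)))")
proof -
  have fin: "finite {..<N}" by simp
  have "bind_pmf (Pi_pmf {..<N} (undefined, undefined) (\<lambda>i. map_pmf snd (belief_draw \<Lambda> i n p s)))
      (\<lambda>w. silent_outcome p s (\<lambda>i. fst (w i)) (\<lambda>i. snd (w i)))
    = bind_pmf ?A (\<lambda>a. bind_pmf (?C a) (\<lambda>w. silent_outcome p s (\<lambda>i. fst (w i)) (\<lambda>i. snd (w i))))"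
    unfolding map_snd_belief_draw
    by (subst Pi_pmf_bind[OF fin, where d'=undefined]) (simp add: bind_assoc_pmf)
  also have "\<dots> = bind_pmf ?A (\<lambda>a. bind_pmf (JT s a) (\<lambda>s'. map_pmf (int_state (p @ [(s, a)]) s') (?C a)))"
  proof (intro bind_pmf_cong refl)
    fix a assume a: "a \<in> set_pmf ?A"
    have "silent_outcome p s (\<lambda>i. fst (w i)) (\<lambda>i. snd (w i)) = map_pmf (\<lambda>s'. int_state (p @ [(s, a)]) s' w) (JT s a)"
      if w: "w \<in> set_pmf (?C a)" for w
    proof -
      have "restrict (\<lambda>i. snd (w i) i) {..<N} = a"
      proof
        fix i show "restrict (\<lambda>i. snd (w i) i) {..<N} i = a i"
          using a w set_cond_belief_draw[of "a i" \<Lambda> i n p s "w i"]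
          by (auto simp: set_Pi_pmf PiE_dflt_def)
      qed
      then show ?thesis by (simp add: silent_outcome_def int_state_def)
    qed
    then show "bind_pmf (?C a) (\<lambda>w. silent_outcome p s (\<lambda>i. fst (w i)) (\<lambda>i. snd (w i)))
      = bind_pmf (JT s a) (\<lambda>s'. map_pmf (int_state (p @ [(s, a)]) s') (?C a))"
      by (simp add: map_pmf_def bind_commute_pmf[of "JT s a"] cong: bind_pmf_cong)
  qed
  finally show ?thesis .
qed

lemma int_step_records_silent:
  assumes silent: "\<not> \<Lambda> n"
  shows "bind_pmf (Pi_pmf {..<N} d (\<lambda>i. belief \<Lambda> i n p)) (int_step_from \<Lambda> n p s)
   = bind_pmf (int_policy \<Lambda> n p s) (\<lambda>a. bind_pmf (JT s a) (\<lambda>s'.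
       map_pmf (int_state (p @ [(s, a)]) s') (records \<Lambda> (Suc n) (p @ [(s, a)]))))"
  unfolding int_step_silent_records[where \<Lambda>=\<Lambda> and n=n, OF silent] silent_records_by_action
  using silent unfolding int_policy_def
  by (intro bind_pmf_cong refl arg_cong2[where f=map_pmf] Pi_pmf_cong) (auto simp: belief_snoc)

lemma int_step_records:
  "bind_pmf (Pi_pmf {..<N} d (\<lambda>i. belief \<Lambda> i n p)) (int_step_from \<Lambda> n p s)
   = bind_pmf (int_policy \<Lambda> n p s) (\<lambda>a. bind_pmf (JT s a) (\<lambda>s'.
       map_pmf (int_state (p @ [(s, a)]) s') (records \<Lambda> (Suc n) (p @ [(s, a)]))))"
proof (cases "\<Lambda> n")
  case True
  then show ?thesis by (rule int_step_records_comm)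
next
  case False
  then show ?thesis by (rule int_step_records_silent)
qed

text \<open>Given the realised prefix, the agents' records are independent, each distributed
  according to the agent's belief.\<close>
lemma int_prefix_st_eq:
  "int_prefix_st N sI T \<pi> \<Lambda> n =
   bind_pmf (run_st (int_policy \<Lambda>) n) (\<lambda>(p, s). map_pmf (int_state p s) (records \<Lambda> n p))"
proof (induction n)
  case 0
  show ?case by (simp add: int_state_def bind_return_pmf)
next
  case (Suc n)
  have "int_prefix_st N sI T \<pi> \<Lambda> (Suc n) = bind_pmf (run_st (int_policy \<Lambda>) n) (\<lambda>(p, s).
     bind_pmf (records \<Lambda> n p) (int_step_from \<Lambda> n p s))"
    by (simp only: int_prefix_st.simps Suc.IH bind_assoc_pmf)
       (auto intro!: bind_pmf_cong simp: bind_map_pmf int_state_def split: prod.splits)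
  also have "\<dots> = bind_pmf (run_st (int_policy \<Lambda>) n) (\<lambda>(p, s). bind_pmf (int_policy \<Lambda> n p s) (\<lambda>a.
     bind_pmf (JT s a) (\<lambda>s'. map_pmf (int_state (p @ [(s, a)]) s') (records \<Lambda> (Suc n) (p @ [(s, a)])))))"
    unfolding int_step_records ..
  also have "\<dots> = bind_pmf (run_st (int_policy \<Lambda>) (Suc n))
     (\<lambda>(p, s). map_pmf (int_state p s) (records \<Lambda> (Suc n) p))"
    by (simp only: run_st_Suc_bind case_prod_conv)
  finally show ?case .
qed

lemma int_prefix_eq_run: "int_prefix N sI T \<pi> \<Lambda> n = run (int_policy \<Lambda>) n"
  unfolding int_prefix_def int_prefix_st_eq map_pmf_def bind_assoc_pmf
  by (intro bind_pmf_cong refl) (auto simp: bind_assoc_pmf bind_return_pmf int_state_def split: prod.splits)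

section \<open>Exactness of the agents' filters\<close>

text \<open>The length of the prefix known to every agent, i.e. up to the last communication.\<close>
primrec last_comm :: "(nat \<Rightarrow> bool) \<Rightarrow> nat \<Rightarrow> nat" where
  "last_comm \<Lambda> 0 = 0"
| "last_comm \<Lambda> (Suc n) = (if \<Lambda> n then Suc n else last_comm \<Lambda> n)"

lemma last_comm_le: "last_comm \<Lambda> n \<le> n"
  by (induction n) auto

definition own_traj :: "nat \<Rightarrow> ('s,'a) step list \<Rightarrow> ('s \<times> 'a) list" where
  "own_traj i p = map (\<lambda>(s, a). (s i, a i)) p"

definition agent_info where
  "agent_info \<Lambda> i p = (take (last_comm \<Lambda> (length p)) p, own_traj i p)"

lemma agent_info_snoc:
  assumes "\<not> \<Lambda> (length p)" "agent_info \<Lambda> i p = agent_info \<Lambda> i p'" "length p = length p'"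
    "s i = s' i" "a i = a' i"
  shows "agent_info \<Lambda> i (p @ [(s, a)]) = agent_info \<Lambda> i (p' @ [(s', a')])"
  using assms last_comm_le[of \<Lambda> "length p"] by (auto simp: agent_info_def own_traj_def)

lemma agent_info_snocD:
  assumes "\<not> \<Lambda> (length p)" "agent_info \<Lambda> i (p @ [(s, a)]) = agent_info \<Lambda> i (p' @ [(s', a')])"
    "length p = length p'"
  shows "agent_info \<Lambda> i p = agent_info \<Lambda> i p'" "s i = s' i" "a i = a' i"
  using assms last_comm_le[of \<Lambda> "length p"] by (auto simp: agent_info_def own_traj_def)

lemma belief_agent_info:
  "length p = n \<Longrightarrow> length p' = n \<Longrightarrow> agent_info \<Lambda> i p = agent_info \<Lambda> i p' \<Longrightarrow>
   belief \<Lambda> i n p = belief \<Lambda> i n p'"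
proof (induction n arbitrary: p p')
  case (Suc n)
  obtain q s a where p: "p = q @ [(s, a)]"
    using Suc.prems(1) by (cases p rule: rev_cases) auto
  obtain q' s' a' where p': "p' = q' @ [(s', a')]"
    using Suc.prems(2) by (cases p' rule: rev_cases) auto
  have len: "length q = n" "length q' = n" using Suc.prems p p' by auto
  show ?case
  proof (cases "\<Lambda> n")
    case True
    then have "p = p'" using Suc.prems by (simp add: agent_info_def)
    then show ?thesis by simp
  next
    case False
    have info: "agent_info \<Lambda> i q = agent_info \<Lambda> i q'" "s i = s' i" "a i = a' i"
      using agent_info_snocD[of \<Lambda> q i s a q' s' a'] False Suc.prems len by (auto simp: p p')
    then have "belief \<Lambda> i n q = belief \<Lambda> i n q'" using Suc.IH len by blast
    then show ?thesis using False info by (simp add: p p' belief_snoc agent_draw_cong[of s i s'])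
  qed
qed simp

definition imagined where "imagined \<Lambda> i n p = bind_pmf (belief \<Lambda> i n p) (imagine n i)"

lemma own_action_imagined:
  "own_action \<Lambda> i n p s = bind_pmf (imagined \<Lambda> i n p) (\<lambda>h. map_pmf (\<lambda>a. a i) (\<pi> (h(i := s i))))"
  unfolding own_action_def agent_draw_def imagined_def
  by (simp add: map_bind_pmf bind_assoc_pmf pmf.map_comp o_def)

lemma imagine_Suc_upd:
  "imagine (Suc n) i (h, a) = Pi_pmf ({..<N} - {i}) undefined (\<lambda>j. T j ((h(i := x)) j) (a j))"
  unfolding imagine_def by (simp, intro Pi_pmf_cong) auto

lemma JT_imagined_Suc:
  assumes i: "i < N" and silent: "\<not> \<Lambda> n"
  shows "bind_pmf (JT (h(i := s i)) a) (\<lambda>s'. bind_pmf (imagined \<Lambda> i (Suc n) (p @ [(h(i := s i), a)]))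
            (\<lambda>h'. \<Psi> (h'(i := s' i))))
       = bind_pmf (map_pmf snd (cond_pmf (belief_draw \<Lambda> i n p s) {z. fst z = a i}))
           (\<lambda>r. bind_pmf (T i (s i) (a i)) (\<lambda>x. bind_pmf (imagine (Suc n) i r) (\<lambda>h'. \<Psi> (h'(i := x)))))"
proof -
  have "bind_pmf (JT (h(i := s i)) a) (\<lambda>s'. bind_pmf (imagined \<Lambda> i (Suc n) (p @ [(h(i := s i), a)]))
            (\<lambda>h'. \<Psi> (h'(i := s' i))))
      = bind_pmf (T i (s i) (a i)) (\<lambda>x. bind_pmf (map_pmf snd (cond_pmf (belief_draw \<Lambda> i n p s) {z. fst z = a i}))
          (\<lambda>r. bind_pmf (imagine (Suc n) i r) (\<lambda>h'. \<Psi> (h'(i := x)))))"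
    using JT_own[OF i, of "h(i := s i)" a] silent
    by (simp add: imagined_def belief_snoc agent_draw_cong[of "h(i := s i)" i s] bind_assoc_pmf)
  then show ?thesis by (simp add: bind_commute_pmf[of "T i (s i) (a i)"])
qed

text \<open>\<open>\<Phi>\<close> sees the new step only through agent \<open>i\<close>'s state and action, so redrawing \<open>i\<close>'s
  record from its belief conditioned on its action leaves the law unchanged; the redrawn
  record is distributed as the next belief.\<close>
lemma imagined_step:
  assumes i: "i < N" and silent: "\<not> \<Lambda> n" and len: "length p = n"
    and info: "\<And>p p' s. length p = Suc n \<Longrightarrow> length p' = Suc n \<Longrightarrow>
       agent_info \<Lambda> i p = agent_info \<Lambda> i p' \<Longrightarrow> \<Phi> p s = \<Phi> p' s"
  shows "bind_pmf (imagined \<Lambda> i n p) (\<lambda>h. let s\<^sub>h = h(i := s i) in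
           bind_pmf (\<pi> s\<^sub>h) (\<lambda>a. bind_pmf (JT s\<^sub>h a) (\<lambda>s'. \<Phi> (p @ [(s\<^sub>h, a)]) s')))
       = bind_pmf (imagined \<Lambda> i n p) (\<lambda>h. let s\<^sub>h = h(i := s i) in
           bind_pmf (\<pi> s\<^sub>h) (\<lambda>a. bind_pmf (JT s\<^sub>h a) (\<lambda>s'.
             bind_pmf (imagined \<Lambda> i (Suc n) (p @ [(s\<^sub>h, a)])) (\<lambda>h'. \<Phi> (p @ [(s\<^sub>h, a)]) (h'(i := s' i))))))"
proof -
  define W where "W = belief_draw \<Lambda> i n p s"
  define F where "F u r = bind_pmf (T i (s i) u) (\<lambda>x. bind_pmf (imagine (Suc n) i r)
      (\<lambda>h'. \<Phi> (p @ [(s, undefined(i := u))]) (h'(i := x))))" for u r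
  have \<Phi>_step: "\<Phi> (p @ [(h(i := s i), a)]) = \<Phi> (p @ [(s, undefined(i := a i))])" for h a
    by (intro ext info) (use len silent in \<open>auto intro!: agent_info_snoc\<close>)
  have "bind_pmf (imagined \<Lambda> i n p) (\<lambda>h. let s\<^sub>h = h(i := s i) in
           bind_pmf (\<pi> s\<^sub>h) (\<lambda>a. bind_pmf (JT s\<^sub>h a) (\<lambda>s'. \<Phi> (p @ [(s\<^sub>h, a)]) s')))
      = bind_pmf W (\<lambda>z. F (fst z) (snd z))"
    unfolding imagined_def W_def agent_draw_def F_def Let_def
    by (simp add: bind_assoc_pmf bind_map_pmf JT_split[OF i] imagine_Suc_upd[of n i _ _ "s i"] \<Phi>_step)
  also have "\<dots> = bind_pmf W (\<lambda>z. bind_pmf (map_pmf snd (cond_pmf W {z'. fst z' = fst z})) (F (fst z)))"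
    by (rule bind_pmf_resample_snd)
  also have "\<dots> = bind_pmf (imagined \<Lambda> i n p) (\<lambda>h. let s\<^sub>h = h(i := s i) in
           bind_pmf (\<pi> s\<^sub>h) (\<lambda>a. bind_pmf (JT s\<^sub>h a) (\<lambda>s'.
             bind_pmf (imagined \<Lambda> i (Suc n) (p @ [(s\<^sub>h, a)])) (\<lambda>h'. \<Phi> (p @ [(s\<^sub>h, a)]) (h'(i := s' i))))))"
  proof -
    have "bind_pmf (JT (h(i := s i)) a) (\<lambda>s'. bind_pmf (imagined \<Lambda> i (Suc n) (p @ [(h(i := s i), a)]))
            (\<lambda>h'. \<Phi> (p @ [(h(i := s i), a)]) (h'(i := s' i))))
        = bind_pmf (map_pmf snd (cond_pmf W {z. fst z = a i})) (F (a i))" for h a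
      unfolding \<Phi>_step W_def F_def by (rule JT_imagined_Suc[where \<Lambda>=\<Lambda> and n=n, OF i silent])
    then show ?thesis
      unfolding imagined_def W_def agent_draw_def Let_def
      by (simp add: bind_assoc_pmf bind_map_pmf)
  qed
  finally show ?thesis .
qed

lemma imagined_comm:
  assumes "i < N" "\<Lambda> n"
  shows "bind_pmf (JT s a) (\<lambda>s'. bind_pmf (imagined \<Lambda> i (Suc n) (p @ [(s, a)])) (\<lambda>h. \<Phi> (h(i := s' i))))
       = bind_pmf (JT s a) \<Phi>"
  using assms by (simp add: imagined_def belief_snoc imagine_def JT_split bind_map_pmf bind_assoc_pmf bind_return_pmf)

lemma agent_info_snoc_same:
  assumes "\<not> \<Lambda> n" "length p = n" "length p' = n" "agent_info \<Lambda> i p = agent_info \<Lambda> i p'"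
  shows "agent_info \<Lambda> i (p @ [(s, a)]) = agent_info \<Lambda> i (p' @ [(s, a)])"
    and "imagined \<Lambda> i (Suc n) (p @ [(s, a)]) = imagined \<Lambda> i (Suc n) (p' @ [(s, a)])"
proof -
  show info: "agent_info \<Lambda> i (p @ [(s, a)]) = agent_info \<Lambda> i (p' @ [(s, a)])"
    using assms by (intro agent_info_snoc) auto
  show "imagined \<Lambda> i (Suc n) (p @ [(s, a)]) = imagined \<Lambda> i (Suc n) (p' @ [(s, a)])"
    unfolding imagined_def using belief_agent_info[OF _ _ info] assms(2,3) by simp
qed

text \<open>Correctness of the imaginary play: under full communication, the conditional law of
  the teammates' true states given agent \<open>i\<close>'s information is that of its imagined states.\<close>
lemma full_st_imagined:
  assumes i: "i < N"
    and info: "\<And>p p' s. length p = n \<Longrightarrow> length p' = n \<Longrightarrow>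
       agent_info \<Lambda> i p = agent_info \<Lambda> i p' \<Longrightarrow> \<Phi> p s = \<Phi> p' s"
  shows "bind_pmf (full_st n) (\<lambda>(p, s). \<Phi> p s) =
         bind_pmf (full_st n) (\<lambda>(p, s). bind_pmf (imagined \<Lambda> i n p) (\<lambda>h. \<Phi> p (h(i := s i))))"
  using info
proof (induction n arbitrary: \<Phi>)
  case 0
  show ?case
    by (simp only: run_st.simps imagined_def imagine_def belief.simps simp_thms if_True bind_return_pmf
        fun_upd_triv case_prod_conv)
next
  case (Suc n)
  define \<Phi>\<^sub>1 where "\<Phi>\<^sub>1 p s = bind_pmf (\<pi> s) (\<lambda>a. bind_pmf (JT s a) (\<lambda>s'. \<Phi> (p @ [(s, a)]) s'))" for p s
  define \<Phi>\<^sub>2 where "\<Phi>\<^sub>2 p s = bind_pmf (\<pi> s) (\<lambda>a. bind_pmf (JT s a) (\<lambda>s'.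
       bind_pmf (imagined \<Lambda> i (Suc n) (p @ [(s, a)])) (\<lambda>h. \<Phi> (p @ [(s, a)]) (h(i := s' i)))))" for p s
  have lhs: "bind_pmf (full_st (Suc n)) (\<lambda>(p, s). \<Phi> p s) = bind_pmf (full_st n) (\<lambda>(p, s). \<Phi>\<^sub>1 p s)"
    and rhs: "bind_pmf (full_st (Suc n)) (\<lambda>(p, s). bind_pmf (imagined \<Lambda> i (Suc n) p) (\<lambda>h. \<Phi> p (h(i := s i))))
      = bind_pmf (full_st n) (\<lambda>(p, s). \<Phi>\<^sub>2 p s)"
    by (simp_all only: run_st_Suc_bind case_prod_conv \<Phi>\<^sub>1_def \<Phi>\<^sub>2_def)
  show ?case
  proof (cases "\<Lambda> n")
    case True
    then show ?thesis unfolding lhs rhs \<Phi>\<^sub>1_def \<Phi>\<^sub>2_def by (simp add: imagined_comm[OF i])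
  next
    case False
    have info\<^sub>1: "\<Phi>\<^sub>1 p s = \<Phi>\<^sub>1 p' s" and info\<^sub>2: "\<Phi>\<^sub>2 p s = \<Phi>\<^sub>2 p' s"
      if "length p = n" "length p' = n" "agent_info \<Lambda> i p = agent_info \<Lambda> i p'" for p p' s
    proof -
      have "\<Phi> (p @ [(s, a)]) = \<Phi> (p' @ [(s, a)])" for a
        using Suc.prems agent_info_snoc_same(1)[OF False that] that by (intro ext) simp
      then show "\<Phi>\<^sub>1 p s = \<Phi>\<^sub>1 p' s" "\<Phi>\<^sub>2 p s = \<Phi>\<^sub>2 p' s"
        unfolding \<Phi>\<^sub>1_def \<Phi>\<^sub>2_def agent_info_snoc_same(2)[OF False that] by simp_all
    qed
    have "bind_pmf (full_st n) (\<lambda>(p, s). \<Phi>\<^sub>1 p s)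
        = bind_pmf (full_st n) (\<lambda>(p, s). bind_pmf (imagined \<Lambda> i n p) (\<lambda>h. \<Phi>\<^sub>1 p (h(i := s i))))"
      by (rule Suc.IH) (rule info\<^sub>1)
    also have "\<dots> = bind_pmf (full_st n) (\<lambda>(p, s). bind_pmf (imagined \<Lambda> i n p) (\<lambda>h. \<Phi>\<^sub>2 p (h(i := s i))))"
    proof (intro bind_pmf_cong refl, clarify)
      fix p s assume "(p, s) \<in> set_pmf (full_st n)"
      then have "length p = n" by (rule run_st_length)
      from imagined_step[where \<Phi>=\<Phi> and s=s and \<Lambda>=\<Lambda> and n=n and p=p, OF i False this] Suc.prems
      show "bind_pmf (imagined \<Lambda> i n p) (\<lambda>h. \<Phi>\<^sub>1 p (h(i := s i)))
          = bind_pmf (imagined \<Lambda> i n p) (\<lambda>h. \<Phi>\<^sub>2 p (h(i := s i)))"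
        unfolding \<Phi>\<^sub>1_def \<Phi>\<^sub>2_def Let_def by blast
    qed
    also have "\<dots> = bind_pmf (full_st n) (\<lambda>(p, s). \<Phi>\<^sub>2 p s)"
      by (rule Suc.IH[symmetric]) (rule info\<^sub>2)
    finally show ?thesis unfolding lhs rhs .
  qed
qed

abbreviation full where "full n \<equiv> map_pmf fst (full_st n)"

lemma full_prefix_eq_full: "full_prefix N sI T \<pi> n = full n"
  unfolding full_prefix_def full_prefix_st_eq_run_st ..

definition info_at where "info_at \<Lambda> i t p = (agent_info \<Lambda> i (take t p), fst (p ! t) i)"

definition pred_at where "pred_at \<Lambda> i t p = own_action \<Lambda> i t (take t p) (fst (p ! t))"

lemma pred_at_info_at:
  assumes "t < length p" "t < length p'" "info_at \<Lambda> i t p = info_at \<Lambda> i t p'"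
  shows "pred_at \<Lambda> i t p = pred_at \<Lambda> i t p'"
proof -
  have "belief \<Lambda> i t (take t p) = belief \<Lambda> i t (take t p')"
    using assms by (intro belief_agent_info) (auto simp: info_at_def)
  then show ?thesis
    using assms(3) agent_draw_cong[of "fst (p ! t)" i "fst (p' ! t)"]
    by (simp add: pred_at_def own_action_def info_at_def)
qed

lemma cond_law_restrict_prefix:
  assumes "cond_law (run \<alpha> (Suc t)) f g c" "t < n"
    and "\<And>p. length p = n \<Longrightarrow> f' p = f (take (Suc t) p)" "\<And>p. length p = n \<Longrightarrow> g' p = g (take (Suc t) p)"
    "\<And>p. length p = n \<Longrightarrow> c' p = c (take (Suc t) p)"
  shows "cond_law (run \<alpha> n) f' g' c'"
proof (rule cond_law_cong)
  have "map_pmf (take (Suc t)) (run \<alpha> n) = run \<alpha> (Suc t)"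
    using assms(2) by (intro run_take) simp
  then show "cond_law (run \<alpha> n) (\<lambda>p. f (take (Suc t) p)) (\<lambda>p. g (take (Suc t) p)) (\<lambda>p. c (take (Suc t) p))"
    using assms(1) by (auto intro: cond_law_map[where h="take (Suc t)"])
  have len: "length p = n" if "p \<in> set_pmf (run \<alpha> n)" for p
    using that by (auto dest: run_st_length)
  show "f' p = f (take (Suc t) p)" "g' p = g (take (Suc t) p)" "c' p = c (take (Suc t) p)"
    if "p \<in> set_pmf (run \<alpha> n)" for p
    using assms(3-5) len[OF that] by simp_all
qed

lemma cond_law_own_action:
  assumes i: "i < N" and t: "t < n"
  shows "cond_law (full n) (info_at \<Lambda> i t) (\<lambda>p. snd (p ! t) i) (pred_at \<Lambda> i t)"
proof (rule cond_law_restrict_prefix[OF _ t])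
  have "map_pmf (\<lambda>p. (info_at \<Lambda> i t p, snd (p ! t) i)) (full (Suc t)) =
      bind_pmf (full_st t) (\<lambda>(p, s). map_pmf (\<lambda>a. ((agent_info \<Lambda> i p, s i), a i)) (\<pi> s))"
    unfolding run_Suc map_bind_pmf
    by (intro bind_pmf_cong refl) (auto simp: pmf.map_comp o_def info_at_def dest!: run_st_length)
  also have "\<dots> = bind_pmf (full_st t) (\<lambda>(p, s). bind_pmf (imagined \<Lambda> i t p)
      (\<lambda>h. map_pmf (\<lambda>a. ((agent_info \<Lambda> i p, (h(i := s i)) i), a i)) (\<pi> (h(i := s i)))))"
    by (rule full_st_imagined[OF i]) simp
  also have "\<dots> = bind_pmf (full_st t) (\<lambda>(p, s). map_pmf (Pair (agent_info \<Lambda> i p, s i)) (own_action \<Lambda> i t p s))"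
    by (simp add: own_action_imagined map_bind_pmf pmf.map_comp o_def)
  also have "\<dots> = bind_pmf (full (Suc t)) (\<lambda>p. map_pmf (Pair (info_at \<Lambda> i t p)) (pred_at \<Lambda> i t p))"
    unfolding run_Suc bind_assoc_pmf bind_map_pmf
    by (intro bind_pmf_cong refl) (auto simp: info_at_def pred_at_def bind_map_pmf nth_append dest!: run_st_length)
  finally show "cond_law (full (Suc t)) (info_at \<Lambda> i t) (\<lambda>p. snd (p ! t) i) (pred_at \<Lambda> i t)"
    unfolding cond_law_def
    by (auto intro: pred_at_info_at dest!: run_st_length)
qed (use t in \<open>auto simp: info_at_def pred_at_def min_def\<close>)

lemma cond_law_policy:
  assumes t: "t < n"
  shows "cond_law (full n) (\<lambda>p. (take t p, fst (p ! t))) (\<lambda>p. snd (p ! t)) (\<lambda>p. \<pi> (fst (p ! t)))"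
proof (rule cond_law_restrict_prefix[OF _ t])
  have "map_pmf (\<lambda>p. ((take t p, fst (p ! t)), snd (p ! t))) (full (Suc t)) =
      bind_pmf (full_st t) (\<lambda>(p, s). map_pmf (\<lambda>a. ((p, s), a)) (\<pi> s))"
    unfolding run_Suc map_bind_pmf
    by (intro bind_pmf_cong refl) (auto simp: pmf.map_comp o_def dest!: run_st_length)
  also have "\<dots> = bind_pmf (full (Suc t)) (\<lambda>p. map_pmf (Pair (take t p, fst (p ! t))) (\<pi> (fst (p ! t))))"
    unfolding run_Suc bind_assoc_pmf bind_map_pmf
    by (intro bind_pmf_cong refl)
       (auto simp: bind_map_pmf nth_append map_pmf_def bind_assoc_pmf bind_return_pmf dest!: run_st_length)
  finally show "cond_law (full (Suc t)) (\<lambda>p. (take t p, fst (p ! t))) (\<lambda>p. snd (p ! t)) (\<lambda>p. \<pi> (fst (p ! t)))"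
    unfolding cond_law_def by auto
qed (use t in \<open>auto simp: min_def\<close>)

end

section \<open>Finite support and log-likelihood ratios\<close>

locale wf_coop_game = coop_game N sI T \<pi>
  for N sI and T :: "nat \<Rightarrow> 's \<Rightarrow> 'a \<Rightarrow> 's pmf" and \<pi> +
  fixes S :: "nat \<Rightarrow> 's set" and A :: "nat \<Rightarrow> 'a set"
  assumes wf: "wf_game N S sI A T \<pi>"
begin

lemma finite_S: "i < N \<Longrightarrow> finite (S i)" and sI_in_S: "i < N \<Longrightarrow> sI i \<in> S i"
  and finite_A: "i < N \<Longrightarrow> finite (A i)"
  and set_T_subset: "i < N \<Longrightarrow> x \<in> S i \<Longrightarrow> b \<in> A i \<Longrightarrow> set_pmf (T i x b) \<subseteq> S i"
  and set_\<pi>_subset: "s \<in> PiE {..<N} S \<Longrightarrow> set_pmf (\<pi> s) \<subseteq> PiE {..<N} A"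
  using wf unfolding wf_game_def by blast+

lemma set_JT_subset:
  assumes "s \<in> PiE {..<N} S" "a \<in> PiE {..<N} A"
  shows "set_pmf (JT s a) \<subseteq> PiE {..<N} S"
proof
  fix s' assume "s' \<in> set_pmf (JT s a)"
  then have "s' \<in> PiE_dflt {..<N} undefined (set_pmf \<circ> (\<lambda>i. T i (s i) (a i)))"
    using set_Pi_pmf_subset'[of "{..<N}" undefined "\<lambda>i. T i (s i) (a i)"] by (auto simp: joint_T_def)
  then show "s' \<in> PiE {..<N} S"
    using assms set_T_subset by (fastforce simp: PiE_dflt_def PiE_def extensional_def)
qed

lemma full_st_support:
  "(p, s) \<in> set_pmf (full_st n) \<Longrightarrow>
   s \<in> PiE {..<N} S \<and> (\<forall>x\<in>set p. fst x \<in> PiE {..<N} S \<and> snd x \<in> PiE {..<N} A)"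
proof (induction n arbitrary: p s)
  case 0
  then show ?case using sI_in_S by (auto split: if_splits)
next
  case (Suc n)
  then obtain q s\<^sub>0 a where q: "(q, s\<^sub>0) \<in> set_pmf (full_st n)" and a: "a \<in> set_pmf (\<pi> s\<^sub>0)"
    and p: "p = q @ [(s\<^sub>0, a)]" and s: "s \<in> set_pmf (JT s\<^sub>0 a)"
    by (auto simp: run_st.simps)
  have IH: "s\<^sub>0 \<in> PiE {..<N} S" "\<forall>x\<in>set q. fst x \<in> PiE {..<N} S \<and> snd x \<in> PiE {..<N} A"
    using Suc.IH[OF q] by blast+
  moreover have "a \<in> PiE {..<N} A" using set_\<pi>_subset[OF IH(1)] a by blast
  moreover have "s \<in> PiE {..<N} S" using set_JT_subset[OF IH(1) calculation(3)] s by blast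
  ultimately show ?case unfolding p by simp
qed

lemma finite_full_st: "finite (set_pmf (full_st n))"
proof (induction n)
  case (Suc n)
  have fin_S: "finite (PiE {..<N} S)" and fin_A: "finite (PiE {..<N} A)"
    using finite_S finite_A by (auto intro: finite_PiE)
  have "set_pmf (full_st (Suc n)) \<subseteq> (\<Union>x\<in>set_pmf (full_st n). \<Union>a\<in>set_pmf (\<pi> (snd x)).
          (\<lambda>s'. (fst x @ [(snd x, a)], s')) ` set_pmf (JT (snd x) a))"
    by (force simp: run_st.simps)
  moreover have "finite \<dots>"
  proof (intro finite_UN_I finite_imageI)
    fix x assume "x \<in> set_pmf (full_st n)"
    then have s: "snd x \<in> PiE {..<N} S" using full_st_support[of "fst x" "snd x"] by simp
    then show "finite (set_pmf (\<pi> (snd x)))"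
      using set_\<pi>_subset fin_A by (auto intro: finite_subset)
    fix a assume "a \<in> set_pmf (\<pi> (snd x))"
    then have "a \<in> PiE {..<N} A" using set_\<pi>_subset[OF s] by blast
    then show "finite (set_pmf (JT (snd x) a))"
      using set_JT_subset[OF s] fin_S by (blast intro: finite_subset)
  qed (use Suc.IH in simp)
  ultimately show ?case by (rule finite_subset)
qed simp

lemma finite_full: "finite (set_pmf (full n))"
  using finite_full_st by simp

lemma full_nth_support:
  assumes "p \<in> set_pmf (full n)" "t < n"
  shows "(take t p, fst (p ! t)) \<in> set_pmf (full_st t)" "snd (p ! t) \<in> set_pmf (\<pi> (fst (p ! t)))"
proof -
  have "take (Suc t) p \<in> set_pmf (map_pmf (take (Suc t)) (full n))"
    using assms(1) by simp
  then have "take (Suc t) p \<in> set_pmf (full (Suc t))"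
    using assms(2) by (simp only: run_take Suc_leI)
  moreover have "take (Suc t) p = take t p @ [(fst (p ! t), snd (p ! t))]"
    using assms by (auto simp: take_Suc_conv_app_nth dest: run_st_length)
  ultimately have "take t p @ [(fst (p ! t), snd (p ! t))] \<in> set_pmf (full (Suc t))" by simp
  from run_snocD[OF this]
  show "(take t p, fst (p ! t)) \<in> set_pmf (full_st t)" "snd (p ! t) \<in> set_pmf (\<pi> (fst (p ! t)))" .
qed

lemma pmf_int_policy_silent:
  assumes p: "p \<in> set_pmf (full n)" and t: "t < n" and silent: "\<not> \<Lambda> t"
  shows "pmf (int_policy \<Lambda> t (take t p) (fst (p ! t))) (snd (p ! t)) = (\<Prod>i<N. pmf (pred_at \<Lambda> i t p) (snd (p ! t) i))"
proof -
  have "fst (p ! t) \<in> PiE {..<N} S"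
    using full_st_support[OF full_nth_support(1)[OF p t]] by blast
  then have "snd (p ! t) \<in> PiE {..<N} A"
    using set_\<pi>_subset full_nth_support(2)[OF p t] by blast
  then have "pmf (Pi_pmf {..<N} undefined (\<lambda>i. pred_at \<Lambda> i t p)) (snd (p ! t))
      = (\<Prod>i<N. pmf (pred_at \<Lambda> i t p) (snd (p ! t) i))"
    by (intro pmf_Pi') auto
  then show ?thesis using silent by (simp add: int_policy_def pred_at_def)
qed

lemma pmf_int_policy_pos:
  assumes p: "p \<in> set_pmf (full n)" and t: "t < n"
  shows "pmf (int_policy \<Lambda> t (take t p) (fst (p ! t))) (snd (p ! t)) > 0"
proof (cases "\<Lambda> t")
  case True
  then show ?thesis using full_nth_support(2)[OF p t] by (simp add: int_policy_def pmf_positive)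
next
  case False
  have "pmf (pred_at \<Lambda> i t p) (snd (p ! t) i) > 0" if "i < N" for i
    using cond_law_pmf_pos[OF cond_law_own_action[OF that t] p] .
  then show ?thesis using pmf_int_policy_silent[where \<Lambda>=\<Lambda>, OF p t False] by (auto intro!: prod_pos)
qed

definition llr where
  "llr \<Lambda> t p = ln (pmf (\<pi> (fst (p ! t))) (snd (p ! t)))
     - ln (pmf (int_policy \<Lambda> t (take t p) (fst (p ! t))) (snd (p ! t)))"

lemma ln_pmf_full_minus_ln_pmf_int:
  "p \<in> set_pmf (full n) \<Longrightarrow> pmf (run (int_policy \<Lambda>) n) p > 0 \<and>
     ln (pmf (full n) p) - ln (pmf (run (int_policy \<Lambda>) n) p) = (\<Sum>t<n. llr \<Lambda> t p)"
proof (induction n arbitrary: p)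
  case (Suc n)
  have len: "length p = Suc n" using Suc.prems by (auto dest: run_st_length)
  then obtain q s a where p: "p = q @ [(s, a)]" by (cases p rule: rev_cases) auto
  with Suc.prems have qs: "(q, s) \<in> set_pmf (full_st n)" and a: "a \<in> set_pmf (\<pi> s)"
    using run_snocD by blast+
  have len_q: "length q = n" using len p by simp
  have q: "q \<in> set_pmf (full n)" using qs by force
  note IH = Suc.IH[OF q]
  have "pmf (full n) q * pmf (state_law q) s > 0"
    using qs by (simp add: pmf_run_st[symmetric] pmf_positive)
  then have pos: "pmf (full n) q > 0" "pmf (state_law q) s > 0"
    by (auto simp: zero_less_mult_iff pmf_nonneg)
  have pos_\<pi>: "pmf (\<pi> s) a > 0" using a by (simp add: pmf_positive)
  have pos_int: "pmf (int_policy \<Lambda> n q s) a > 0"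
    using pmf_int_policy_pos[OF Suc.prems, of n \<Lambda>] p len_q by (simp add: nth_append)
  have llr_q: "llr \<Lambda> t p = llr \<Lambda> t q" if "t < n" for t
    using that len_q by (simp add: p llr_def nth_append)
  have llr_n: "llr \<Lambda> n p = ln (pmf (\<pi> s) a) - ln (pmf (int_policy \<Lambda> n q s) a)"
    using len_q by (simp add: p llr_def nth_append)
  show ?case
    using IH pos pos_\<pi> pos_int llr_q llr_n
    by (simp add: p pmf_run_snoc ln_mult_pos)
qed simp

lemma sum_full_ln_ratio:
  "(\<Sum>p\<in>set_pmf (full n). pmf (full n) p * ln (pmf (full n) p / pmf (run (int_policy \<Lambda>) n) p))
   = (\<Sum>t<n. pmf_expect (full n) (llr \<Lambda> t))"
proof -
  have "(\<Sum>p\<in>set_pmf (full n). pmf (full n) p * ln (pmf (full n) p / pmf (run (int_policy \<Lambda>) n) p))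
      = pmf_expect (full n) (\<lambda>p. \<Sum>t<n. llr \<Lambda> t p)"
    unfolding pmf_expect_def
  proof (intro sum.cong refl)
    fix p assume p: "p \<in> set_pmf (full n)"
    then show "pmf (full n) p * ln (pmf (full n) p / pmf (run (int_policy \<Lambda>) n) p)
        = pmf (full n) p * (\<Sum>t<n. llr \<Lambda> t p)"
      using ln_pmf_full_minus_ln_pmf_int[OF p, of \<Lambda>] pmf_positive[OF p] by (simp add: ln_div)
  qed
  then show ?thesis by (simp add: pmf_expect_sum)
qed

lemma pmf_KL_full_int:
  "pmf_KL (full n) (run (int_policy \<Lambda>) n) = ereal (\<Sum>t<n. pmf_expect (full n) (llr \<Lambda> t))"
proof -
  have "\<not> (\<exists>p\<in>set_pmf (full n). pmf (run (int_policy \<Lambda>) n) p = 0)"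
  proof
    assume "\<exists>p\<in>set_pmf (full n). pmf (run (int_policy \<Lambda>) n) p = 0"
    then obtain p where "p \<in> set_pmf (full n)" "pmf (run (int_policy \<Lambda>) n) p = 0" by blast
    with ln_pmf_full_minus_ln_pmf_int[OF this(1), of \<Lambda>] show False by simp
  qed
  then show ?thesis by (simp only: pmf_KL_def sum_full_ln_ratio if_False)
qed

abbreviation never :: "nat \<Rightarrow> bool" where "never \<equiv> \<lambda>_. False"

lemma llr_comm: "\<Lambda> t \<Longrightarrow> llr \<Lambda> t p = 0"
  by (simp add: llr_def int_policy_def)

lemma expect_llr_silent:
  assumes t: "t < n" and silent: "\<not> \<Lambda> t"
  shows "pmf_expect (full n) (llr \<Lambda> t) = pmf_expect (full n) (\<lambda>p. ln (pmf (\<pi> (fst (p ! t))) (snd (p ! t))))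
     - (\<Sum>i<N. pmf_expect (full n) (\<lambda>p. ln (pmf (pred_at \<Lambda> i t p) (snd (p ! t) i))))"
proof -
  have "llr \<Lambda> t p = ln (pmf (\<pi> (fst (p ! t))) (snd (p ! t))) - (\<Sum>i<N. ln (pmf (pred_at \<Lambda> i t p) (snd (p ! t) i)))"
    if p: "p \<in> set_pmf (full n)" for p
  proof -
    have "pmf (pred_at \<Lambda> i t p) (snd (p ! t) i) > 0" if "i < N" for i
      using cond_law_pmf_pos[OF cond_law_own_action[OF that t] p] .
    then have "ln (\<Prod>i<N. pmf (pred_at \<Lambda> i t p) (snd (p ! t) i)) = (\<Sum>i<N. ln (pmf (pred_at \<Lambda> i t p) (snd (p ! t) i)))"
      by (intro ln_prod) (auto simp: less_imp_neq[symmetric])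
    then show ?thesis by (simp add: llr_def pmf_int_policy_silent[where \<Lambda>=\<Lambda>, OF p t silent])
  qed
  then have "pmf_expect (full n) (llr \<Lambda> t) = pmf_expect (full n) (\<lambda>p. ln (pmf (\<pi> (fst (p ! t))) (snd (p ! t)))
     - (\<Sum>i<N. ln (pmf (pred_at \<Lambda> i t p) (snd (p ! t) i))))"
    by (rule pmf_expect_cong)
  then show ?thesis by (simp add: pmf_expect_diff pmf_expect_sum)
qed

lemma info_at_never:
  "info_at \<Lambda> i t p = info_at \<Lambda> i t p' \<Longrightarrow> info_at never i t p = info_at never i t p'"
proof -
  have "last_comm never m = 0" for m by (induction m) auto
  then show "info_at \<Lambda> i t p = info_at \<Lambda> i t p' \<Longrightarrow> ?thesis"
    by (simp add: info_at_def agent_info_def)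
qed

text \<open>Under \<open>\<Lambda>\<close> agent \<open>i\<close> knows at least as much as without communication, so by Gibbs'
  inequality its true conditional law predicts its action at least as well as the silent
  predictor does.\<close>
lemma expect_llr_le_never:
  assumes t: "t < n" and silent: "\<not> \<Lambda> t"
  shows "pmf_expect (full n) (llr \<Lambda> t) \<le> pmf_expect (full n) (llr never t)"
proof -
  have "pmf_expect (full n) (\<lambda>p. ln (pmf (pred_at never i t p) (snd (p ! t) i)))
      \<le> pmf_expect (full n) (\<lambda>p. ln (pmf (pred_at \<Lambda> i t p) (snd (p ! t) i)))" if i: "i < N" for i
  proof (rule cond_law_gibbs[OF finite_full cond_law_own_action[OF i t]])
    show "pred_at never i t p = pred_at never i t p'"
      if "p \<in> set_pmf (full n)" "p' \<in> set_pmf (full n)" "info_at \<Lambda> i t p = info_at \<Lambda> i t p'" for p p'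
      using that t by (intro pred_at_info_at info_at_never) (auto dest: run_st_length)
    show "pmf (pred_at never i t p) (snd (p ! t) i) > 0" if "p \<in> set_pmf (full n)" for p
      using cond_law_pmf_pos[OF cond_law_own_action[OF i t] that] .
  qed
  moreover have "pmf_expect (full n) (llr never t) = pmf_expect (full n) (\<lambda>p. ln (pmf (\<pi> (fst (p ! t))) (snd (p ! t))))
     - (\<Sum>i<N. pmf_expect (full n) (\<lambda>p. ln (pmf (pred_at never i t p) (snd (p ! t) i))))"
    by (rule expect_llr_silent[OF t]) simp
  ultimately show ?thesis
    unfolding expect_llr_silent[where \<Lambda>=\<Lambda>, OF t silent]
    by (auto intro!: diff_left_mono sum_mono)
qed

lemma expect_llr_never_nonneg:
  assumes t: "t < n"
  shows "0 \<le> pmf_expect (full n) (llr never t)"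
proof -
  have "pmf_expect (full n) (\<lambda>p. ln (pmf (int_policy never t (take t p) (fst (p ! t))) (snd (p ! t))))
      \<le> pmf_expect (full n) (\<lambda>p. ln (pmf (\<pi> (fst (p ! t))) (snd (p ! t))))"
  proof (rule cond_law_gibbs[OF finite_full cond_law_policy[OF t]])
    show "pmf (int_policy never t (take t p) (fst (p ! t))) (snd (p ! t)) > 0" if "p \<in> set_pmf (full n)" for p
      using pmf_int_policy_pos[OF that t] .
  qed auto
  then show ?thesis by (simp add: llr_def[abs_def] pmf_expect_diff)
qed

lemma expect_llr_le:
  assumes "t < n"
  shows "pmf_expect (full n) (llr \<Lambda> t) \<le> (if \<Lambda> t then 0 else pmf_expect (full n) (llr never t))"
  using assms expect_llr_le_never[of t n \<Lambda>] by (auto simp: llr_comm pmf_expect_def)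

lemma img_prefix_0_eq: "img_prefix N sI T \<pi> 0 n = run (int_policy never) n"
  unfolding img_prefix_def int_prefix_eq_run by simp

lemma pmf_KL_img_prefix_0:
  "pmf_KL (full_prefix N sI T \<pi> n) (img_prefix N sI T \<pi> 0 n) = ereal (\<Sum>t<n. pmf_expect (full n) (llr never t))"
  unfolding img_prefix_0_eq full_prefix_eq_full by (rule pmf_KL_full_int)

lemma pmf_KL_int_prefix_le:
  "pmf_KL (full_prefix N sI T \<pi> n) (int_prefix N sI T \<pi> \<Lambda> n)
   \<le> pmf_KL (full_prefix N sI T \<pi> n) (img_prefix N sI T \<pi> 0 n)"
proof -
  have "(\<Sum>t<n. pmf_expect (full n) (llr \<Lambda> t)) \<le> (\<Sum>t<n. pmf_expect (full n) (llr never t))"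
  proof (intro sum_mono)
    fix t assume "t \<in> {..<n}"
    then show "pmf_expect (full n) (llr \<Lambda> t) \<le> pmf_expect (full n) (llr never t)"
      using expect_llr_le[of t n \<Lambda>] expect_llr_never_nonneg[of t n] by (simp split: if_splits)
  qed
  then show ?thesis
    unfolding pmf_KL_img_prefix_0 unfolding int_prefix_eq_run full_prefix_eq_full pmf_KL_full_int by simp
qed

lemma pmf_KL_int_mix_prefix_le:
  assumes q: "0 < q" "q \<le> 1"
  shows "pmf_KL (full_prefix N sI T \<pi> n) (int_mix_prefix N sI T \<pi> q n)
         \<le> ereal (q * (\<Sum>t<n. pmf_expect (full n) (llr never t)))"
proof -
  define B where "B = Pi_pmf {..<n} False (\<lambda>_. bernoulli_pmf (1 - q))"
  have fin_B: "finite (set_pmf B)"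
    unfolding B_def by (subst set_Pi_pmf) auto
  have silent_prob: "pmf_expect B (\<lambda>\<Lambda>. if \<Lambda> t then 0 else 1) = q" if "t < n" for t
  proof -
    have "pmf_expect B (\<lambda>\<Lambda>. if \<Lambda> t then 0 else 1) = pmf_expect (map_pmf (\<lambda>\<Lambda>. \<Lambda> t) B) (\<lambda>b. if b then 0 else 1)"
      using fin_B by (simp add: pmf_expect_map)
    also have "map_pmf (\<lambda>\<Lambda>. \<Lambda> t) B = bernoulli_pmf (1 - q)"
      unfolding B_def using that by (subst Pi_pmf_component) auto
    also have "pmf_expect (bernoulli_pmf (1 - q)) (\<lambda>b. if b then 0 else 1) = q"
      using q by (subst pmf_expect_eq_expectation) (auto intro: finite_subset[of _ "UNIV :: bool set"])
    finally show ?thesis .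
  qed
  have "pmf_KL (full n) (bind_pmf B (\<lambda>\<Lambda>. run (int_policy \<Lambda>) n))
      \<le> ereal (pmf_expect B (\<lambda>\<Lambda>. \<Sum>p\<in>set_pmf (full n). pmf (full n) p * ln (pmf (full n) p / pmf (run (int_policy \<Lambda>) n) p)))"
    using ln_pmf_full_minus_ln_pmf_int by (intro pmf_KL_bind_le[OF fin_B]) blast
  also have "pmf_expect B (\<lambda>\<Lambda>. \<Sum>p\<in>set_pmf (full n). pmf (full n) p * ln (pmf (full n) p / pmf (run (int_policy \<Lambda>) n) p))
      \<le> pmf_expect B (\<lambda>\<Lambda>. \<Sum>t<n. pmf_expect (full n) (llr never t) * (if \<Lambda> t then 0 else 1))"
    unfolding sum_full_ln_ratio
  proof (intro pmf_expect_mono sum_mono)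
    fix \<Lambda> :: "nat \<Rightarrow> bool" and t assume "t \<in> {..<n}"
    then show "pmf_expect (full n) (llr \<Lambda> t) \<le> pmf_expect (full n) (llr never t) * (if \<Lambda> t then 0 else 1)"
      using expect_llr_le[of t n \<Lambda>] by (simp split: if_splits)
  qed
  also have "\<dots> = (\<Sum>t<n. pmf_expect (full n) (llr never t) * pmf_expect B (\<lambda>\<Lambda>. if \<Lambda> t then 0 else 1))"
    by (simp only: pmf_expect_sum pmf_expect_cmult)
  also have "\<dots> = q * (\<Sum>t<n. pmf_expect (full n) (llr never t))"
    by (simp add: silent_prob sum_distrib_left mult.commute)
  finally show ?thesis
    unfolding full_prefix_eq_full int_mix_prefix_def int_prefix_eq_run B_def by simp
qed

lemma pmf_KL_int_mix_prefix_le_img: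
  assumes q: "0 < q" "q \<le> 1"
  shows "ereal (1 / q) * pmf_KL (full_prefix N sI T \<pi> n) (int_mix_prefix N sI T \<pi> q n)
         \<le> pmf_KL (full_prefix N sI T \<pi> n) (img_prefix N sI T \<pi> 0 n)"
proof -
  have "ereal (1 / q) * pmf_KL (full_prefix N sI T \<pi> n) (int_mix_prefix N sI T \<pi> q n)
      \<le> ereal (1 / q) * ereal (q * (\<Sum>t<n. pmf_expect (full n) (llr never t)))"
    using q by (intro ereal_mult_left_mono pmf_KL_int_mix_prefix_le) auto
  also have "\<dots> = pmf_KL (full_prefix N sI T \<pi> n) (img_prefix N sI T \<pi> 0 n)"
    using q by (simp add: pmf_KL_img_prefix_0)
  finally show ?thesis .
qed

end

theorem lemma2:
  fixes N :: nat
    and S :: "nat \<Rightarrow> 's set" and sI :: "nat \<Rightarrow> 's"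
    and A :: "nat \<Rightarrow> 'a set" and T :: "nat \<Rightarrow> 's \<Rightarrow> 'a \<Rightarrow> 's pmf"
    and \<pi> :: "(nat \<Rightarrow> 's) \<Rightarrow> (nat \<Rightarrow> 'a) pmf"
  assumes "wf_game N S sI A T \<pi>"
  shows "(\<forall>\<Lambda> :: nat \<Rightarrow> bool.
            path_KL (full_prefix N sI T \<pi>) (img_prefix N sI T \<pi> 0)
              \<ge> path_KL (full_prefix N sI T \<pi>) (int_prefix N sI T \<pi> \<Lambda>))
       \<and> (\<forall>q :: real. 0 < q \<and> q \<le> 1 \<longrightarrow>
            path_KL (full_prefix N sI T \<pi>) (img_prefix N sI T \<pi> 0)
              \<ge> ereal (1 / q) * path_KL (full_prefix N sI T \<pi>) (int_mix_prefix N sI T \<pi> q))"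
proof -
  interpret wf_coop_game N sI T \<pi> S A by unfold_locales (rule assms)
  show ?thesis
  proof (intro conjI allI impI)
    fix \<Lambda> :: "nat \<Rightarrow> bool"
    show "path_KL (full_prefix N sI T \<pi>) (img_prefix N sI T \<pi> 0)
            \<ge> path_KL (full_prefix N sI T \<pi>) (int_prefix N sI T \<pi> \<Lambda>)"
      unfolding path_KL_def by (intro SUP_mono) (auto intro: pmf_KL_int_prefix_le)
  next
    fix q :: real assume q: "0 < q \<and> q \<le> 1"
    have "ereal (1 / q) * path_KL (full_prefix N sI T \<pi>) (int_mix_prefix N sI T \<pi> q) =
          (SUP n. ereal (1 / q) * pmf_KL (full_prefix N sI T \<pi> n) (int_mix_prefix N sI T \<pi> q n))"
      unfolding path_KL_def using q by (intro Sup_ereal_mult_left') auto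
    also have "\<dots> \<le> path_KL (full_prefix N sI T \<pi>) (img_prefix N sI T \<pi> 0)"
      unfolding path_KL_def using q by (intro SUP_mono) (auto intro: pmf_KL_int_mix_prefix_le_img)
    finally show "path_KL (full_prefix N sI T \<pi>) (img_prefix N sI T \<pi> 0)
            \<ge> ereal (1 / q) * path_KL (full_prefix N sI T \<pi>) (int_mix_prefix N sI T \<pi> q)" .
  qed
qed

end
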